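(* For all positive integers $n$ and $k$ with $k\le 2^n$, we have $v_2\big(H(2^n,k)\big)\le -n$.
   Context: For positive integers $N\ge k$, $H(N,k)=\sum_{1\le i_1<\cdots<i_k\le N}\frac{1}{i_1\cdots i_k}$ is the $k$-th elementary symmetric function of $1,\frac12,\dots,\frac1N$. For a nonzero rational $x=n_1/n_2$ with integers $n_1,n_2$, $v_2(x)=v_2(n_1)-v_2(n_2)$, where $v_2$ is the $2$-adic valuation. *)

theory Defs
  imports "HOL-Computational_Algebra.Computational_Algebra"
begin

definition H :: "nat \<Rightarrow> nat \<Rightarrow> rat" where
  "H N k = (\<Sum>S | S \<subseteq> {1..N} \<and> card S = k. \<Prod>i\<in>S. 1 / of_nat i)"

definition v2 :: "rat \<Rightarrow> int" where
  "v2 x = (let (a, b) = quotient_of x in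
             int (multiplicity (2::int) a) - int (multiplicity (2::int) b))"

end

theory Submission
  imports Defs "HOL-Library.Log_Nat"
begin

text \<open>\<open>H(N,k)\<close> is the coefficient of \<open>x^k\<close> in \<open>\<Prod>i=1..N. (1 + x/i) = \<Prod>i=1..N. (x + i) / N!\<close>, so
  \<open>v\<^sub>2(H(2^n,k)) = v\<^sub>2(c\<^sub>k) - v\<^sub>2(c\<^sub>0)\<close> for the coefficients \<open>c\<^sub>k\<close> of
  \<open>F\<^sub>n = \<Prod>i=1..2^n. (x + i)\<close> (\<open>rising_poly n\<close>). These valuations are computed exactly,
  \<open>v\<^sub>2(c\<^sub>k) = 2^n - n k + \<kappa>(k)\<close>, by induction on \<open>n\<close>: \<open>F\<^sub>n\<close> is the product of its odd factors
  \<open>A\<^sub>n\<close> (\<open>odd_poly n\<close>) and of its even factors, which equal \<open>2^(2^(n-1)) F\<^sub>n\<^sub>-\<^sub>1(x/2)\<close>, and in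
  the resulting convolution for \<open>c\<^sub>k\<close> exactly one term has minimal valuation. The valuations of
  the coefficients of \<open>A\<^sub>n\<close> come from \<open>A\<^sub>n = T\<^sub>n(x\<^sup>2 + 2^n x)\<close> (\<open>paired_poly n\<close>), where
  \<open>T\<^sub>n\<^sub>+\<^sub>1 \<equiv> T\<^sub>n\<^sup>2\<close> modulo \<open>2^n\<close>. The theorem then reduces to \<open>\<kappa>(k) + 1 - n k \<le> -n\<close>.\<close>

section \<open>2-adic valuations of natural numbers\<close>

lemma multiplicity2_dvd_iff:
  fixes a :: nat
  assumes "0 < a" shows "2 ^ e dvd a \<longleftrightarrow> e \<le> multiplicity 2 a"
  using assms by (intro power_dvd_iff_le_multiplicity) auto

lemma multiplicity2_power2: "multiplicity 2 ((2::nat) ^ q) = q"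
  by simp

lemma multiplicity2_pos: "even (a::nat) \<Longrightarrow> 0 < a \<Longrightarrow> 1 \<le> multiplicity 2 a"
  using multiplicity2_dvd_iff[of a 1] by simp

lemma multiplicity2_double:
  fixes a :: nat
  assumes "0 < a" shows "multiplicity 2 (2 * a) = Suc (multiplicity 2 a)"
  using assms by (intro multiplicity_times_same) auto

lemma two_power_multiplicity2_le: "0 < a \<Longrightarrow> 2 ^ multiplicity 2 a \<le> (a::nat)"
  using multiplicity_dvd dvd_imp_le by blast

lemma multiplicity2_less: "0 < a \<Longrightarrow> a < 2 ^ q \<Longrightarrow> multiplicity 2 (a::nat) < q"
  using two_power_multiplicity2_le[of a] by (metis leD le_less_trans nat_power_less_imp_less
      not_less zero_less_numeral)

lemma multiplicity2_le: "0 < a \<Longrightarrow> a \<le> 2 ^ q \<Longrightarrow> multiplicity 2 (a::nat) \<le> q"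
  using multiplicity2_less[of a "Suc q"] by simp

lemma double_le_two_power: "2 * v \<le> (2::nat) ^ v"
proof (induction v)
  case (Suc v) then show ?case by (cases v) auto
qed simp

lemma double_multiplicity2_le: "2 * multiplicity 2 a \<le> (a::nat)"
  using two_power_multiplicity2_le[of a] double_le_two_power[of "multiplicity 2 a"]
  by (cases "a = 0") auto

lemma multiplicity2_add_ge:
  fixes a b :: nat
  assumes "0 < a" "0 < b" shows "min (multiplicity 2 a) (multiplicity 2 b) \<le> multiplicity 2 (a + b)"
proof -
  let ?m = "min (multiplicity 2 a) (multiplicity 2 b)"
  have "2 ^ ?m dvd a" "2 ^ ?m dvd b" using multiplicity2_dvd_iff assms by auto
  then show ?thesis using multiplicity2_dvd_iff[of "a + b" ?m] assms by simp
qed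

lemma multiplicity2_add_less:
  fixes a b :: nat
  assumes "0 < a" "0 < b" "multiplicity 2 a < multiplicity 2 b"
  shows "multiplicity 2 (a + b) = multiplicity 2 a"
  using assms by (intro multiplicity_sum_lt) auto

lemma multiplicity2_add_eq:
  fixes a b :: nat
  assumes a: "0 < a" and b: "0 < b" and eq: "multiplicity 2 a = multiplicity 2 b"
  shows "multiplicity 2 a < multiplicity 2 (a + b)"
proof -
  obtain c where c: "a = 2 ^ multiplicity 2 a * c" "odd c"
    using multiplicity_decompose'[of a 2] a by auto
  obtain d where d: "b = 2 ^ multiplicity 2 b * d" "odd d"
    using multiplicity_decompose'[of b 2] b by auto
  have "a + b = 2 ^ multiplicity 2 a * (c + d)"
    using c d eq by (simp add: algebra_simps)
  moreover have "even (c + d)" using c d by simp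
  ultimately have "2 ^ Suc (multiplicity 2 a) dvd a + b" by (auto simp: mult_dvd_mono)
  then show ?thesis using multiplicity2_dvd_iff[of "a + b" "Suc (multiplicity 2 a)"] a by simp
qed

lemma multiplicity2_add_bound:
  fixes i j :: nat
  assumes "0 < i" "0 < j" "multiplicity 2 i \<le> L" "multiplicity 2 j \<le> L"
  shows "multiplicity 2 i + multiplicity 2 j \<le> L + multiplicity 2 (i + j)"
  using multiplicity2_add_less[of i j] multiplicity2_add_less[of j i] multiplicity2_add_eq[of i j] assms
  by (cases "multiplicity 2 i" "multiplicity 2 j" rule: linorder_cases) (auto simp: add.commute)

lemma multiplicity2_shift_bound:
  fixes u a :: nat
  assumes "0 < u" "2 \<le> a" "multiplicity 2 u \<le> L"
  shows "int (multiplicity 2 u) - int (multiplicity 2 (u + a)) < int a + int L - int (multiplicity 2 a)"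
proof -
  have "multiplicity 2 u \<le> multiplicity 2 (u + a) \<or> multiplicity 2 (u + a) = multiplicity 2 a"
    using multiplicity2_add_ge[of u a] multiplicity2_add_less[of a u] assms
    by (cases "multiplicity 2 u \<le> multiplicity 2 a") (auto simp: add.commute)
  then show ?thesis using double_multiplicity2_le[of a] assms by auto
qed

lemma multiplicity2_power_minus:
  fixes x :: nat
  assumes x: "0 < x" "x < 2 ^ q"
  shows "multiplicity 2 (2 ^ q - x) = multiplicity 2 x"
proof -
  have y: "0 < 2 ^ q - x" and s: "(2 ^ q - x) + x = 2 ^ q" using x by auto
  have "multiplicity 2 x < q" "multiplicity 2 (2 ^ q - x) < q"
    using multiplicity2_less x y by auto
  then show ?thesis using multiplicity2_add_less[OF y x(1)] multiplicity2_add_less[OF x(1) y] s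
    by (metis add.commute linorder_neqE_nat multiplicity2_power2)
qed


section \<open>The exponent function \<open>kappa\<close>\<close>

lemma power_pred: "1 \<le> q \<Longrightarrow> (x::'a::monoid_mult) ^ q = x * x ^ (q - 1)"
  by (cases q) auto

lemma two_power_pred_double: "2 \<le> n \<Longrightarrow> (2::nat) ^ (n - 1) = 2 * 2 ^ (n - 2)"
proof -
  assume "2 \<le> n"
  then have "n - 1 = Suc (n - 2)" by simp
  then show ?thesis by simp
qed

lemma two_power_quadruple: "2 \<le> n \<Longrightarrow> (2::nat) ^ n = 4 * 2 ^ (n - 2)"
  by (metis le_add_diff_inverse2 mult.commute power_add power2_eq_square numeral_Bit0 mult_2)

lemma ceillog2_le: "k \<le> 2 ^ m \<Longrightarrow> ceillog2 k \<le> m"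
  using ceillog2_le_iff[of k m] by (cases "k = 0") auto

lemma ceillog2_gt:
  assumes "2 \<le> k" shows "1 \<le> ceillog2 k" "2 ^ (ceillog2 k - 1) < k"
proof -
  show "1 \<le> ceillog2 k" using ceillog2_ge_iff[of k 1] assms by simp
  then have "2 * 2 ^ (ceillog2 k - 1) = (2::nat) ^ ceillog2 k"
    using power_pred[of "ceillog2 k" "2::nat"] by simp
  then show "2 ^ (ceillog2 k - 1) < k" using two_power_ceillog2_gt[of k] assms by linarith
qed

lemma ceillog2_eqI':
  assumes "1 \<le> P" "2 ^ (P - 1) < k" "k \<le> 2 ^ P" shows "ceillog2 k = P"
proof (rule ceillog2_eqI)
  have "(2::nat) ^ P = 2 * 2 ^ (P - 1)" using power_pred assms(1) by blast
  then show "2 ^ P < 2 * k" using assms(2) by linarith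
qed (use assms in simp)

lemma ceillog2_block:
  assumes "2 \<le> k"
  shows "2 ^ (ceillog2 k - 1) < k" "k \<le> 2 ^ ceillog2 k" "(2::nat) ^ ceillog2 k = 2 * 2 ^ (ceillog2 k - 1)"
  using ceillog2_gt[OF assms] le_two_power_ceillog2[of k] power_pred[of "ceillog2 k" "2::nat"] by auto

text \<open>The 2-adic valuation
  of the coefficient of \<open>x^k\<close> in \<open>\<Prod>i=1..2^n. (x + i)\<close> turns out to be \<open>2^n - n k + kappa k\<close>.\<close>

definition kappa_corr :: "nat \<Rightarrow> int" where
  "kappa_corr k = (let P = ceillog2 k; r = k - 2 ^ (P - 1) in
     if P \<le> 1 then 0
     else if odd r then 2 * int P - 2 - int (multiplicity 2 (r + 1))
     else int P - 1 - int (multiplicity 2 r))"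

definition kappa :: "nat \<Rightarrow> int" where
  "kappa k = (if k = 0 then -1 else int k * int (ceillog2 k) - 2 ^ ceillog2 k + kappa_corr k)"

lemma kappa_corr_eq:
  assumes "2 \<le> P" "2 ^ (P - 1) < k" "k \<le> 2 ^ P"
  shows "kappa_corr k = (if odd (k - 2 ^ (P - 1))
                         then 2 * int P - 2 - int (multiplicity 2 (k - 2 ^ (P - 1) + 1))
                         else int P - 1 - int (multiplicity 2 (k - 2 ^ (P - 1))))"
  using assms ceillog2_eqI'[of P k] unfolding kappa_corr_def Let_def by simp

lemma kappa_corr_small: "ceillog2 k \<le> 1 \<Longrightarrow> kappa_corr k = 0"
  unfolding kappa_corr_def Let_def by simp

lemma kappa_corr_bounds:
  assumes "2 \<le> ceillog2 k"
  shows "0 \<le> kappa_corr k" "kappa_corr k \<le> 2 * int (ceillog2 k) - 3"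
proof -
  define P where "P = ceillog2 k"
  define r where "r = k - 2 ^ (P - 1)"
  have k2: "2 \<le> k" using ceillog2_le[of k 1] assms by (cases "k \<le> 1") (auto simp: le_Suc_eq)
  have r: "1 \<le> r" "r \<le> 2 ^ (P - 1)" using ceillog2_block[OF k2] P_def r_def by auto
  have "multiplicity 2 r \<le> P - 1" using multiplicity2_le r by simp
  moreover have "multiplicity 2 (r + 1) \<le> P - 1" if "odd r"
  proof -
    have "even ((2::nat) ^ (P - 1))" using assms P_def by simp
    then have "r + 1 \<le> 2 ^ (P - 1)" using r that by (cases "r = 2 ^ (P - 1)") auto
    then show ?thesis using multiplicity2_le by simp
  qed
  moreover have "1 \<le> multiplicity 2 (r + 1)" if "odd r" using multiplicity2_pos[of "r + 1"] that by simp
  ultimately show "0 \<le> kappa_corr k" "kappa_corr k \<le> 2 * int (ceillog2 k) - 3"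
    using assms unfolding kappa_corr_def Let_def P_def[symmetric] r_def[symmetric] by auto
qed

lemma kappa_corr_nonneg: "0 \<le> kappa_corr k"
  using kappa_corr_bounds(1)[of k] kappa_corr_small[of k] by (cases "2 \<le> ceillog2 k") auto

lemma kappa_corr_le: "kappa_corr k \<le> 2 * int (ceillog2 k)"
  using kappa_corr_bounds(2)[of k] kappa_corr_small[of k] by (cases "2 \<le> ceillog2 k") auto

lemma kappa_corr_eq_gap:
  assumes "1 \<le> k"
  defines "P \<equiv> ceillog2 k" and "s \<equiv> 2 ^ ceillog2 k - k"
  shows "kappa_corr k = (if s = 0 then 0 else if s = 1 then int P - 1
          else if odd s then 2 * int P - 2 - int (multiplicity 2 (s - 1))
          else int P - 1 - int (multiplicity 2 s))"
proof (cases "P \<le> 1")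
  case True
  then have "k = 1 \<or> 2 \<le> k" "k \<le> 2 ^ P" using assms le_two_power_ceillog2 by auto
  then have "s = 0" using True ceillog2_gt[of k] unfolding s_def P_def by (auto simp: le_Suc_eq)
  then show ?thesis using kappa_corr_small True P_def by simp
next
  case False
  define r where "r = k - 2 ^ (P - 1)"
  have k2: "2 \<le> k" using False ceillog2_le[of k 1] P_def by (cases "k \<le> 1") (auto simp: le_Suc_eq)
  have rs: "r + s = 2 ^ (P - 1)" "1 \<le> r" using ceillog2_block[OF k2] r_def s_def P_def by auto
  have ev: "even ((2::nat) ^ (P - 1))" using False by simp
  have par: "odd r \<longleftrightarrow> odd s" using rs ev by (metis even_add)
  have "multiplicity 2 (r + 1) = multiplicity 2 (s - 1)" if "odd s" "s \<noteq> 1"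
  proof -
    have "1 < s" using that odd_pos by fastforce
    then have "r + 1 = 2 ^ (P - 1) - (s - 1)" "0 < s - 1" "s - 1 < 2 ^ (P - 1)"
      using rs by auto
    then show ?thesis using multiplicity2_power_minus[of "s - 1" "P - 1"] by (simp only:)
  qed
  moreover have "multiplicity 2 r = multiplicity 2 s" if "s \<noteq> 0"
  proof -
    have "r = 2 ^ (P - 1) - s" using rs by simp
    then show ?thesis using multiplicity2_power_minus[of s "P - 1"] rs that by simp
  qed
  moreover have "kappa_corr k = (if odd r then 2 * int P - 2 - int (multiplicity 2 (r + 1))
                                 else int P - 1 - int (multiplicity 2 r))"
    using False unfolding kappa_corr_def Let_def P_def r_def by simp
  ultimately show ?thesis using rs par ev False by auto
qed

lemma kappa_small_values: "kappa 0 = -1" "kappa 1 = -1" "kappa 2 = 0" "kappa 3 = 3" "kappa 4 = 4"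
proof -
  have c: "ceillog2 3 = 2" "ceillog2 4 = 2" by (rule ceillog2_eqI'; simp)+
  have "multiplicity (2::nat) (Suc (Suc 0)) = Suc 0" by (simp flip: numeral_2_eq_2)
  then have "kappa_corr 3 = 1" "kappa_corr 4 = 0"
    using kappa_corr_eq[of 2 3] kappa_corr_eq[of 2 4] by simp_all
  then show "kappa 0 = -1" "kappa 1 = -1" "kappa 2 = 0" "kappa 3 = 3" "kappa 4 = 4"
    using c kappa_corr_small[of 1] kappa_corr_small[of 2] unfolding kappa_def by simp_all
qed

lemma kappa_diff:
  assumes "1 \<le> b" "b \<le> k" "ceillog2 b \<le> ceillog2 k"
  shows "kappa k - kappa b = int (k - b) * int (ceillog2 k)
           + int (b * (ceillog2 k - ceillog2 b) + 2 ^ ceillog2 b) - 2 ^ ceillog2 k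
           + kappa_corr k - kappa_corr b"
proof -
  have "int (b * (ceillog2 k - ceillog2 b) + 2 ^ ceillog2 b)
        = int b * (int (ceillog2 k) - int (ceillog2 b)) + 2 ^ ceillog2 b"
    using assms(3) by (simp add: of_nat_diff)
  then show ?thesis using assms unfolding kappa_def by (simp add: of_nat_diff algebra_simps)
qed

lemma mult_diff_add_power_le:
  assumes "q \<le> P" "b \<le> 2 ^ q" shows "b * (P - q) + 2 ^ q \<le> (2::nat) ^ P"
proof -
  have "b * (P - q) + 2 ^ q \<le> 2 ^ q * (P - q) + 2 ^ q" using assms(2) by simp
  also have "\<dots> = 2 ^ q * (P - q + 1)" by (simp add: algebra_simps)
  also have "\<dots> \<le> 2 ^ q * 2 ^ (P - q)"
    using less_exp[of "P - q"] by (intro mult_le_mono2) linarith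
  also have "\<dots> = 2 ^ P" using assms(1) by (simp flip: power_add)
  finally show ?thesis .
qed

lemma succ_le_two_power_pred: "3 \<le> d \<Longrightarrow> d + 1 \<le> (2::nat) ^ (d - 1)"
proof (induction d rule: nat_induct_at_least)
  case (Suc d)
  then show ?case using power_pred[of "d - 1" "2::nat"] by (cases d) auto
qed simp

lemma mult_diff_add_power_le_half:
  assumes "q + 3 \<le> P" "b \<le> 2 ^ q" shows "b * (P - q) + 2 ^ q \<le> (2::nat) ^ (P - 1)"
proof -
  have "b * (P - q) + 2 ^ q \<le> 2 ^ q * (P - q) + 2 ^ q" using assms(2) by simp
  also have "\<dots> = 2 ^ q * (P - q + 1)" by (simp add: algebra_simps)
  also have "\<dots> \<le> 2 ^ q * 2 ^ (P - q - 1)"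
    using succ_le_two_power_pred[of "P - q"] assms by (intro mult_le_mono2) simp
  also have "\<dots> = 2 ^ (P - 1)" using assms(1) by (simp flip: power_add)
  finally show ?thesis .
qed

text \<open>The 2-adic valuation of the coefficient of \<open>x^a\<close> in \<open>\<Prod>j<2^(n-1). (x + 2j + 1)\<close>: exact for
  \<open>a = 0\<close> and even \<open>a\<close>, a lower bound for odd \<open>a\<close>.\<close>

definition odd_poly_val :: "nat \<Rightarrow> nat \<Rightarrow> int" where
  "odd_poly_val n a = (if a = 0 then 0 else if even a then int n - 1 - int (multiplicity 2 a) else 2 * int n - 2)"

lemma odd_poly_val_nonneg: "a \<le> 2 ^ (n - 1) \<Longrightarrow> 1 \<le> n \<Longrightarrow> 0 \<le> odd_poly_val n a"
  using multiplicity2_le[of a "n - 1"] unfolding odd_poly_val_def by auto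

lemma kappa_corr_diff_same_block:
  assumes P: "2 \<le> P" and b: "2 ^ (P - 1) < b" and bk: "b < k" and k: "k \<le> 2 ^ P"
    and ev: "even (k - b)"
  shows "kappa_corr k - kappa_corr b < int (k - b) + int P - 1 - int (multiplicity 2 (k - b))"
proof -
  define a where "a = k - b"
  define rb where "rb = b - 2 ^ (P - 1)"
  have a2: "2 \<le> a" using ev bk a_def by presburger
  have rk: "k - 2 ^ (P - 1) = rb + a" using b bk rb_def a_def by simp
  have "k = b + a" using bk a_def by simp
  then have rb: "0 < rb" "rb + 1 \<le> 2 ^ (P - 1)"
    using b k a2 rb_def power_pred[of P "2::nat"] P by auto
  have "kappa_corr k = (if odd (rb + a) then 2 * int P - 2 - int (multiplicity 2 (rb + a + 1))
                        else int P - 1 - int (multiplicity 2 (rb + a)))"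
    using kappa_corr_eq[OF P _ k] b bk unfolding rk by simp
  then have "kappa_corr k = (if odd rb then 2 * int P - 2 - int (multiplicity 2 (rb + 1 + a))
                             else int P - 1 - int (multiplicity 2 (rb + a)))"
    using ev unfolding a_def[symmetric] by (simp add: ac_simps)
  moreover have "kappa_corr b = (if odd rb then 2 * int P - 2 - int (multiplicity 2 (rb + 1))
                                 else int P - 1 - int (multiplicity 2 rb))"
    using kappa_corr_eq[OF P b] bk k rb_def by simp
  moreover have "int (multiplicity 2 (rb + 1)) - int (multiplicity 2 (rb + 1 + a))
                   < int a + int (P - 1) - int (multiplicity 2 a)"
    by (rule multiplicity2_shift_bound) (use rb a2 multiplicity2_le in auto)
  moreover have "int (multiplicity 2 rb) - int (multiplicity 2 (rb + a))
                   < int a + int (P - 1) - int (multiplicity 2 a)"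
    by (rule multiplicity2_shift_bound) (use rb a2 multiplicity2_le in auto)
  ultimately show ?thesis using P unfolding a_def by auto
qed

lemma kappa_corr_diff_adjacent_block:
  assumes P: "2 \<le> P" and q: "ceillog2 b = P - 1" and b: "1 \<le> b"
    and kl: "2 ^ (P - 1) < k" and ku: "k \<le> 2 ^ P" and ev: "even (k - b)"
  shows "kappa_corr k - kappa_corr b - int (2 ^ (P - 1) - b) < int (k - b) + int P - int (multiplicity 2 (k - b))"
proof -
  define r where "r = k - 2 ^ (P - 1)"
  define s where "s = 2 ^ (P - 1) - b"
  have bq: "b \<le> 2 ^ (P - 1)" using le_two_power_ceillog2[of b] q by simp
  have ars: "k - b = r + s" and r1: "1 \<le> r" using r_def s_def bq kl by auto
  have par: "odd r \<longleftrightarrow> odd s" using ars ev by simp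
  have vk: "multiplicity 2 (k - b) \<le> P" using multiplicity2_le[of "k - b" P] kl ku bq by simp
  have "kappa_corr k = (if odd r then 2 * int P - 2 - int (multiplicity 2 (r + 1))
                        else int P - 1 - int (multiplicity 2 r))"
    using kappa_corr_eq[OF P kl ku] r_def by simp
  moreover have "kappa_corr b = (if s = 0 then 0 else if s = 1 then int (P - 1) - 1
          else if odd s then 2 * int (P - 1) - 2 - int (multiplicity 2 (s - 1))
          else int (P - 1) - 1 - int (multiplicity 2 s))"
    using kappa_corr_eq_gap[OF b] q s_def by simp
  moreover have "1 \<le> multiplicity 2 (r + 1)" if "odd r" using multiplicity2_pos[of "r + 1"] that by simp
  moreover have "2 * multiplicity 2 s \<le> s" "2 * multiplicity 2 (s - 1) \<le> s - 1"
    by (rule double_multiplicity2_le)+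
  moreover have "2 * multiplicity 2 (k - b) \<le> k - b" by (rule double_multiplicity2_le)
  ultimately show ?thesis using par ars P vk unfolding s_def[symmetric] by (auto split: if_splits)
qed

lemma kappa_diff_less_even:
  assumes b1: "1 \<le> b" and bk: "b < k" and ev: "even (k - b)"
  shows "kappa k - kappa b < int (ceillog2 k + 1) * int (k - b) + int (ceillog2 k) - int (multiplicity 2 (k - b))"
proof -
  define P where "P = ceillog2 k"
  define q where "q = ceillog2 b"
  define a where "a = k - b"
  define G where "G = int (b * (P - q) + 2 ^ q) - 2 ^ P"
  have a2: "2 \<le> a" using ev bk a_def by presburger
  have Pk: "2 ^ (P - 1) < k" "k \<le> 2 ^ P" "(2::nat) ^ P = 2 * 2 ^ (P - 1)"
    using ceillog2_block[of k] a2 b1 a_def P_def by auto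
  have P2: "2 \<le> P" using Pk a2 b1 a_def by (cases "P \<le> 1") (auto simp: le_Suc_eq)
  have qP: "q \<le> P" using ceillog2_le[of b P] Pk bk q_def by simp
  have bq: "b \<le> 2 ^ q" using le_two_power_ceillog2 q_def by simp
  have diff: "kappa k - kappa b = int a * int P + G + kappa_corr k - kappa_corr b"
    using kappa_diff[of b k] b1 bk qP unfolding P_def q_def a_def G_def by simp
  have ta: "2 * multiplicity 2 a \<le> a" by (rule double_multiplicity2_le)
  consider "q = P" | "q = P - 1" | "q + 2 \<le> P" using qP by linarith
  then have "G + kappa_corr k - kappa_corr b < int a + int P - int (multiplicity 2 a)"
  proof cases
    case 1
    then have "2 \<le> b" using P2 b1 q_def by (cases "b = 1") auto
    then have "2 ^ (P - 1) < b" using ceillog2_gt[of b] 1 q_def by simp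
    then show ?thesis using kappa_corr_diff_same_block[OF P2 _ bk Pk(2)] ev 1 unfolding G_def a_def
      by simp
  next
    case 2
    then have "G = - int (2 ^ (P - 1) - b)" using bq P2 power_pred[of P "2::int"] unfolding G_def by simp
    then show ?thesis using kappa_corr_diff_adjacent_block[OF P2 _ b1 Pk(1,2) ev] 2 q_def a_def
      by simp
  next
    case 3
    have "(2::nat) ^ q \<le> 2 ^ (P - 2)" using 3 by (intro power_increasing) auto
    then have "b \<le> 2 ^ (P - 2)" using bq by linarith
    moreover have "(2::nat) ^ (P - 1) = 2 * 2 ^ (P - 2)" using power_pred[of "P - 1" "2::nat"] P2 by simp
    ultimately have "2 * (P - 2) + 1 \<le> a" using double_le_two_power[of "P - 2"] Pk a_def by linarith
    moreover have "int (b * (P - q) + 2 ^ q) \<le> int (2 ^ P)"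
      using mult_diff_add_power_le[OF qP bq] by (simp only: of_nat_le_iff)
    then have "G \<le> 0" unfolding G_def by simp
    ultimately show ?thesis using kappa_corr_bounds(2)[of k] kappa_corr_nonneg[of b] P2 ta P_def
      by linarith
  qed
  then show ?thesis using diff unfolding a_def P_def by (simp add: algebra_simps)
qed

lemma kappa_corr_diff_upper_adjacent:
  assumes n3: "3 \<le> n" and kl: "2 ^ (n - 1) < k" and ku: "k \<le> 2 ^ n"
    and q: "ceillog2 b = n - 1" and ev: "even (k - b)"
    and nd: "b \<noteq> (if odd (k - 2 ^ (n - 1)) then 2 ^ (n - 1) - 1 else 2 ^ (n - 1))"
  shows "kappa_corr k - kappa_corr b < int (2 ^ (n - 1) - b)"
proof -
  define r where "r = k - 2 ^ (n - 1)"
  define s where "s = 2 ^ (n - 1) - b"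
  have b1: "1 \<le> b" using q n3 by (cases "b = 0") auto
  have bq: "b \<le> 2 ^ (n - 1)" using le_two_power_ceillog2[of b] q by simp
  have "k - b = r + s" using kl bq r_def s_def by simp
  then have par: "odd r \<longleftrightarrow> odd s" using ev by simp
  have "kappa_corr k = (if odd r then 2 * int n - 2 - int (multiplicity 2 (r + 1))
                        else int n - 1 - int (multiplicity 2 r))"
    using kappa_corr_eq[OF _ kl ku] n3 r_def by simp
  moreover have "kappa_corr b = (if s = 0 then 0 else if s = 1 then int (n - 1) - 1
          else if odd s then 2 * int (n - 1) - 2 - int (multiplicity 2 (s - 1))
          else int (n - 1) - 1 - int (multiplicity 2 s))"
    using kappa_corr_eq_gap[OF b1] q s_def by simp
  moreover have "odd r \<Longrightarrow> 1 \<le> multiplicity 2 (r + 1)" using multiplicity2_pos[of "r + 1"] by simp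
  moreover have "even r \<Longrightarrow> 1 \<le> multiplicity 2 r" using multiplicity2_pos[of r] kl r_def by simp
  moreover have "2 * multiplicity 2 s \<le> s" "2 * multiplicity 2 (s - 1) \<le> s - 1"
    by (rule double_multiplicity2_le)+
  moreover have "odd r \<Longrightarrow> s \<noteq> 1" "even r \<Longrightarrow> s \<noteq> 0" using nd bq r_def s_def by auto
  ultimately show ?thesis using par n3 unfolding s_def[symmetric] by (auto split: if_splits)
qed

lemma kappa_corr_diff_upper_next:
  assumes n3: "3 \<le> n" and kl: "2 ^ (n - 1) < k" and ku: "k \<le> 2 ^ n"
    and q: "ceillog2 b = n - 2" and ev: "even (k - b)" and bk: "b \<le> k"
  shows "int (2 * b + 2 ^ (n - 2)) - 2 ^ n + kappa_corr k - kappa_corr b < 0"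
proof -
  define r where "r = k - 2 ^ (n - 1)"
  have bq: "b \<le> 2 ^ (n - 2)" using le_two_power_ceillog2[of b] q by simp
  have p4: "(2::int) ^ n = 4 * 2 ^ (n - 2)"
    using power_pred[of n "2::int"] power_pred[of "n - 1" "2::int"] n3 by simp
  have ev2: "even ((2::nat) ^ (n - 2))" "even ((2::nat) ^ (n - 1))" using n3 by simp_all
  have "k = r + 2 ^ (n - 1)" "k = (k - b) + b" using kl bk r_def by simp_all
  then have parb: "odd r \<longleftrightarrow> odd b" using ev ev2 by (metis even_add)
  have "int (2 * (n - 2)) \<le> int (2 ^ (n - 2))"
    using double_le_two_power[of "n - 2"] by (simp only: of_nat_le_iff)
  then have tw: "2 * int n - 4 \<le> 2 ^ (n - 2)" using n3 by simp
  have kc: "kappa_corr k = (if odd r then 2 * int n - 2 - int (multiplicity 2 (r + 1))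
                        else int n - 1 - int (multiplicity 2 r))"
    using kappa_corr_eq[OF _ kl ku] n3 r_def by simp
  show ?thesis
  proof (cases "odd r")
    case True
    then have "b \<noteq> 2 ^ (n - 2)" using parb ev2 by auto
    then have "int (b + 1) \<le> int (2 ^ (n - 2))" using bq by (simp only: of_nat_le_iff)
    then have "int b + 1 \<le> 2 ^ (n - 2)" by simp
    then show ?thesis using kc kappa_corr_bounds(2)[of k] kappa_corr_nonneg[of b] p4 tw kl ku n3
      ceillog2_eqI'[of n k] by simp
  next
    case False
    then have "kappa_corr k \<le> int n - 2" using kc multiplicity2_pos[of r] kl r_def by simp
    moreover have "int b \<le> int (2 ^ (n - 2))" using bq by (simp only: of_nat_le_iff)
    then have "int b \<le> 2 ^ (n - 2)" by simp
    moreover have "int (2 * b + 2 ^ (n - 2)) = 2 * int b + 2 ^ (n - 2)" by simp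
    ultimately show ?thesis using kappa_corr_nonneg[of b] p4 tw n3 by linarith
  qed
qed

lemma kappa_diff_le:
  assumes "1 \<le> b" "b \<le> k"
  shows "kappa k - kappa b \<le> int (k - b) * int (ceillog2 k) + kappa_corr k - kappa_corr b"
proof -
  have q: "ceillog2 b \<le> ceillog2 k" using assms ceillog2_le le_two_power_ceillog2 order_trans by blast
  have "int (b * (ceillog2 k - ceillog2 b) + 2 ^ ceillog2 b) \<le> int (2 ^ ceillog2 k)"
    using mult_diff_add_power_le[OF q le_two_power_ceillog2] by (simp only: of_nat_le_iff)
  then show ?thesis using kappa_diff[OF assms q] by simp
qed

lemma kappa_diff_less_lower:
  assumes b1: "1 \<le> b" and bk: "b < k" and kM: "k \<le> 2 ^ (n - 1)" and n1: "1 \<le> n"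
  shows "kappa k - kappa b < int n * int (k - b) + odd_poly_val n (k - b)"
proof -
  define P where "P = ceillog2 k"
  define a where "a = k - b"
  have Pn: "int P \<le> int n - 1" using ceillog2_le[OF kM] n1 P_def by simp
  have aP: "int a * int P \<le> int a * (int n - 1)" using Pn by (intro mult_left_mono) auto
  show ?thesis
  proof (cases "odd a")
    case True
    then have "odd_poly_val n a = 2 * int n - 2" unfolding odd_poly_val_def by auto
    moreover have "1 \<le> a" using bk a_def by simp
    ultimately show ?thesis using kappa_diff_le[of b k] b1 bk kappa_corr_le[of k] kappa_corr_nonneg[of b]
      aP Pn unfolding a_def[symmetric] P_def[symmetric] by (simp add: algebra_simps)
  next
    case False
    then have "odd_poly_val n a = int n - 1 - int (multiplicity 2 a)" using bk a_def unfolding odd_poly_val_def by auto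
    then show ?thesis using kappa_diff_less_even[of b k] b1 bk False aP Pn
      unfolding a_def[symmetric] P_def[symmetric] by (simp add: algebra_simps)
  qed
qed

lemma kappa_diff_less_lower_zero:
  assumes k1: "1 \<le> k" and kM: "k \<le> 2 ^ (n - 1)" and n1: "1 \<le> n"
  shows "kappa k - kappa 0 < int n * int k + odd_poly_val n k"
proof -
  define P where "P = ceillog2 k"
  have Pn: "int P \<le> int n - 1" using ceillog2_le[OF kM] n1 P_def by simp
  have "kappa_corr k + 1 \<le> 2 ^ P"
  proof (cases "2 \<le> P")
    case True
    have "int (2 * P) \<le> int (2 ^ P)" using double_le_two_power[of P] by (simp only: of_nat_le_iff)
    then show ?thesis using kappa_corr_bounds(2)[of k] True P_def by simp
  qed (use kappa_corr_small P_def in simp)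
  moreover have "int k * int P \<le> int k * (int n - 1)" using Pn by (intro mult_left_mono) auto
  moreover have "0 \<le> odd_poly_val n k" using odd_poly_val_nonneg kM n1 by simp
  moreover have "kappa k = int k * int P - 2 ^ P + kappa_corr k" "kappa 0 = -1"
    unfolding kappa_def P_def using k1 by simp_all
  ultimately show ?thesis using k1 by (simp add: algebra_simps)
qed

lemma kappa_corr_diff_upper_even:
  assumes n3: "3 \<le> n" and kl: "2 ^ (n - 1) < k" and ku: "k \<le> 2 ^ n"
    and bM: "b \<le> 2 ^ (n - 1)" and bk: "b < k" and ev: "even (k - b)"
    and nd: "b \<noteq> (if odd (k - 2 ^ (n - 1)) then 2 ^ (n - 1) - 1 else 2 ^ (n - 1))"
  shows "int (b * (n - ceillog2 b) + 2 ^ ceillog2 b) - 2 ^ n + kappa_corr k - kappa_corr b < 0"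
proof -
  define q where "q = ceillog2 b"
  have qn: "q \<le> n - 1" using ceillog2_le bM q_def by simp
  have bq: "b \<le> 2 ^ q" using le_two_power_ceillog2 q_def by simp
  have M: "(2::int) ^ n = 2 * 2 ^ (n - 1)" using power_pred[of n "2::int"] n3 by simp
  consider "q = n - 1" | "q = n - 2" | "q + 3 \<le> n" using qn by linarith
  then have "int (b * (n - q) + 2 ^ q) - 2 ^ n + kappa_corr k - kappa_corr b < 0"
  proof cases
    case 1
    then show ?thesis using kappa_corr_diff_upper_adjacent[OF n3 kl ku _ ev nd] bq M n3 q_def by simp
  next
    case 2
    then have "n - q = 2" using n3 by simp
    then show ?thesis using kappa_corr_diff_upper_next[OF n3 kl ku _ ev less_imp_le[OF bk]] 2 q_def
      by simp
  next
    case 3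
    have "int (b * (n - q) + 2 ^ q) \<le> int (2 ^ (n - 1))"
      using mult_diff_add_power_le_half[OF 3 bq] by (simp only: of_nat_le_iff)
    moreover have "int (2 * (n - 1)) \<le> int (2 ^ (n - 1))"
      using double_le_two_power[of "n - 1"] by (simp only: of_nat_le_iff)
    ultimately show ?thesis
      using kappa_corr_bounds(2)[of k] kappa_corr_nonneg[of b] ceillog2_eqI'[of n k] kl ku M n3 by simp
  qed
  then show ?thesis using q_def by simp
qed

lemma kappa_diff_less_upper:
  assumes n3: "3 \<le> n" and kl: "2 ^ (n - 1) < k" and ku: "k \<le> 2 ^ n"
    and bM: "b \<le> 2 ^ (n - 1)" and aM: "k - b \<le> 2 ^ (n - 1)"
    and nd: "b \<noteq> (if odd (k - 2 ^ (n - 1)) then 2 ^ (n - 1) - 1 else 2 ^ (n - 1))"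
  shows "kappa k - kappa b < int n * int (k - b) + odd_poly_val n (k - b)"
proof -
  have Pn: "ceillog2 k = n" using ceillog2_eqI'[of n k] n3 kl ku by simp
  have b1: "1 \<le> b" and bk: "b < k" using kl aM bM by auto
  show ?thesis
  proof (cases "odd (k - b)")
    case True
    then have "odd_poly_val n (k - b) = 2 * int n - 2" unfolding odd_poly_val_def by auto
    then show ?thesis using kappa_diff_le[of b k] b1 bk kappa_corr_bounds(2)[of k] kappa_corr_nonneg[of b]
      Pn n3 by (simp add: algebra_simps)
  next
    case False
    have "ceillog2 b \<le> n" using ceillog2_le[OF bM] by simp
    then have "kappa k - kappa b = int (k - b) * int n
        + (int (b * (n - ceillog2 b) + 2 ^ ceillog2 b) - 2 ^ n + kappa_corr k - kappa_corr b)"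
      using kappa_diff[of b k] b1 bk Pn by simp
    moreover have "0 \<le> odd_poly_val n (k - b)" using odd_poly_val_nonneg aM n3 by simp
    ultimately show ?thesis using kappa_corr_diff_upper_even[OF n3 kl ku bM bk _ nd] False
      by (simp add: algebra_simps)
  qed
qed

text \<open>The index \<open>b\<close> of the unique term of least 2-adic valuation in the convolution
  \<open>[x^k] (\<Prod>j odd. (x + j)) \<cdot> (\<Prod>j even. (x + j))\<close>, where \<open>b\<close> is the degree taken from the even factors.\<close>

definition dominant_index :: "nat \<Rightarrow> nat \<Rightarrow> nat" where
  "dominant_index n k = (if k \<le> 2 ^ (n - 1) then k
     else if odd (k - 2 ^ (n - 1)) then 2 ^ (n - 1) - 1 else 2 ^ (n - 1))"

lemma dominant_index_bounds:
  assumes n3: "3 \<le> n" and ku: "k \<le> 2 ^ n"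
  defines "b \<equiv> dominant_index n k"
  shows "b \<le> k" "b \<le> 2 ^ (n - 1)" "k - b \<le> 2 ^ (n - 1)"
    and "k - b = 0 \<or> (even (k - b) \<and> 2 \<le> k - b)"
proof -
  have M: "(2::nat) ^ n = 2 * 2 ^ (n - 1)" "even ((2::nat) ^ (n - 1))" "2 \<le> (2::nat) ^ (n - 1)"
    using power_pred[of n "2::nat"] n3 power_increasing[of 1 "n - 1" "2::nat"] by auto
  show "b \<le> k" "b \<le> 2 ^ (n - 1)" using M unfolding b_def dominant_index_def by auto
  have "k - b \<le> 2 ^ (n - 1) \<and> (k - b = 0 \<or> (even (k - b) \<and> 2 \<le> k - b))"
  proof (cases "k \<le> 2 ^ (n - 1)")
    case False
    define r where "r = k - 2 ^ (n - 1)"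
    have r: "1 \<le> r" "r \<le> 2 ^ (n - 1)" using False ku M r_def by auto
    have "odd r \<Longrightarrow> r \<noteq> 2 ^ (n - 1)" using M by auto
    moreover have "k - b = (if odd r then r + 1 else r)"
      using False M unfolding b_def dominant_index_def r_def by auto
    ultimately show ?thesis using r by (auto simp: odd_pos)
  qed (simp add: b_def dominant_index_def)
  then show "k - b \<le> 2 ^ (n - 1)" "k - b = 0 \<or> (even (k - b) \<and> 2 \<le> k - b)" by auto
qed

lemma kappa_diff_dominant:
  assumes n3: "3 \<le> n" and ku: "k \<le> 2 ^ n"
  defines "b \<equiv> dominant_index n k"
  shows "kappa k - kappa b = int n * int (k - b) + odd_poly_val n (k - b)"
proof (cases "k \<le> 2 ^ (n - 1)")
  case True
  then show ?thesis unfolding b_def dominant_index_def odd_poly_val_def by simp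
next
  case False
  define r where "r = k - 2 ^ (n - 1)"
  have M: "(2::nat) ^ (n - 1) = 2 * 2 ^ (n - 1 - 1)" "2 \<le> (2::nat) ^ (n - 1 - 1)"
    using power_pred[of "n - 1" "2::nat"] n3 power_increasing[of 1 "n - 1 - 1" "2::nat"] by auto
  have Mi: "(2::int) ^ n = 2 * 2 ^ (n - 1)" using power_pred[of n "2::int"] n3 by simp
  have b: "b = (if odd r then 2 ^ (n - 1) - 1 else 2 ^ (n - 1))"
    using False unfolding b_def dominant_index_def r_def by simp
  have r: "1 \<le> r" "r \<le> 2 ^ (n - 1)" using False ku power_pred[of n "2::nat"] n3 r_def by auto
  have qb: "ceillog2 b = n - 1" using M n3 b by (intro ceillog2_eqI') auto
  have diff: "kappa k - kappa b = int (k - b) * int n + int (b + 2 ^ (n - 1)) - 2 ^ n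
                + kappa_corr k - kappa_corr b"
  proof -
    have "1 \<le> b" "b \<le> k" using b M False by auto
    moreover have "ceillog2 k = n" using ceillog2_eqI'[of n k] False ku n3 by simp
    ultimately show ?thesis using kappa_diff[of b k] qb n3 by simp
  qed
  have kc: "kappa_corr k = (if odd r then 2 * int n - 2 - int (multiplicity 2 (r + 1))
                            else int n - 1 - int (multiplicity 2 r))"
    using kappa_corr_eq[of n k] False ku n3 r_def by simp
  show ?thesis
  proof (cases "odd r")
    case True
    then have bM: "b = 2 ^ (n - 1) - 1" using b by simp
    moreover have "1 \<le> b" using bM M by linarith
    ultimately have "1 \<le> b" "2 ^ ceillog2 b - b = 1" using qb by auto
    then have "kappa_corr b = int (n - 1) - 1" using kappa_corr_eq_gap[of b] qb by simp
    moreover have "k - b = r + 1" using bM M r r_def by arith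
    moreover have "int (b + 2 ^ (n - 1)) = 2 ^ n - 1"
      using bM Mi \<open>1 \<le> b\<close> by (simp add: of_nat_diff)
    ultimately show ?thesis using diff kc True n3 unfolding odd_poly_val_def by (simp add: algebra_simps)
  next
    case False
    then have bM: "b = 2 ^ (n - 1)" using b by simp
    then have "kappa_corr b = 0" using kappa_corr_eq_gap[of b] qb M by simp
    moreover have "k - b = r" using bM r_def by simp
    moreover have "int (b + 2 ^ (n - 1)) = 2 ^ n" using bM Mi by simp
    ultimately show ?thesis using diff kc False r n3 unfolding odd_poly_val_def by (simp add: algebra_simps)
  qed
qed

lemma kappa_diff_less:
  assumes n3: "3 \<le> n" and ku: "k \<le> 2 ^ n" and bk: "b \<le> k"
    and bM: "b \<le> 2 ^ (n - 1)" and aM: "k - b \<le> 2 ^ (n - 1)" and nd: "b \<noteq> dominant_index n k"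
  shows "kappa k - kappa b < int n * int (k - b) + odd_poly_val n (k - b)"
proof (cases "k \<le> 2 ^ (n - 1)")
  case True
  then have "b < k" using bk nd unfolding dominant_index_def by simp
  then show ?thesis
    using kappa_diff_less_lower[of b k n] kappa_diff_less_lower_zero[of k n] True n3
    by (cases "b = 0") auto
next
  case False
  then show ?thesis using kappa_diff_less_upper[OF n3 _ ku bM aM] nd unfolding dominant_index_def by simp
qed


section \<open>Exact and lower bounds for 2-adic valuations of integers\<close>

definition val2_eq :: "int \<Rightarrow> int \<Rightarrow> bool" where
  "val2_eq x e \<longleftrightarrow> (\<exists>u. odd u \<and> 0 \<le> e \<and> x = 2 ^ nat e * u)"

definition val2_ge :: "int \<Rightarrow> int \<Rightarrow> bool" where
  "val2_ge x e \<longleftrightarrow> (e \<le> 0 \<or> 2 ^ nat e dvd x)"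

lemma val2_eqI: "x = 2 ^ m * u \<Longrightarrow> odd u \<Longrightarrow> val2_eq x (int m)"
  unfolding val2_eq_def by auto

lemma val2_eq_nonneg: "val2_eq x e \<Longrightarrow> 0 \<le> e" unfolding val2_eq_def by auto

lemma val2_eq_mult: "val2_eq x e \<Longrightarrow> val2_eq y d \<Longrightarrow> val2_eq (x * y) (e + d)"
  unfolding val2_eq_def
proof (elim exE conjE)
  fix u v assume "odd u" "0 \<le> e" "x = 2 ^ nat e * u" "odd v" "0 \<le> d" "y = 2 ^ nat d * v"
  then show "\<exists>w. odd w \<and> 0 \<le> e + d \<and> x * y = 2 ^ nat (e+d) * w"
    by (intro exI[of _ "u*v"]) (simp add: nat_add_distrib power_add algebra_simps)
qed

lemma val2_ge_mult:
  "val2_ge x e \<Longrightarrow> val2_ge y d \<Longrightarrow> 0 \<le> e \<Longrightarrow> 0 \<le> d \<Longrightarrow> val2_ge (x * y) (e + d)"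
  unfolding val2_ge_def
proof -
  assume h: "e \<le> 0 \<or> 2 ^ nat e dvd x" "d \<le> 0 \<or> 2 ^ nat d dvd y" "0 \<le> e" "0 \<le> d"
  have "(2::int) ^ nat e dvd x" using h by (cases "e = 0") auto
  moreover have "(2::int) ^ nat d dvd y" using h by (cases "d = 0") auto
  ultimately have "(2::int) ^ nat e * 2 ^ nat d dvd x * y" by (rule mult_dvd_mono)
  then show "e + d \<le> 0 \<or> 2 ^ nat (e + d) dvd x * y" using h by (simp add: nat_add_distrib power_add)
qed

lemma val2_eq_imp_ge: "val2_eq x e \<Longrightarrow> val2_ge x e"
  unfolding val2_eq_def val2_ge_def by auto

lemma val2_ge_mono: "val2_ge x e \<Longrightarrow> d \<le> e \<Longrightarrow> val2_ge x d"
  unfolding val2_ge_def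
proof -
  assume h: "e \<le> 0 \<or> 2 ^ nat e dvd x" "d \<le> e"
  show "d \<le> 0 \<or> 2 ^ nat d dvd x"
  proof (cases "d \<le> 0")
    case False
    then have "(2::int) ^ nat d dvd 2 ^ nat e" using h by (intro le_imp_power_dvd) auto
    then show ?thesis using h False dvd_trans by auto
  qed simp
qed

lemma val2_ge_0 [simp]: "val2_ge 0 e"
  unfolding val2_ge_def by simp
lemma val2_eq_power2: "val2_eq (2 ^ m) (int m)" unfolding val2_eq_def by (intro exI[of _ 1]) simp
lemma val2_eq_odd: "odd x \<Longrightarrow> val2_eq x 0" unfolding val2_eq_def by (intro exI[of _ x]) simp
lemma val2_ge_power2_mult: "val2_ge (2 ^ m * x) (int m)" unfolding val2_ge_def by simp

lemma val2_ge_multiplicity: "val2_ge (int l) (int (multiplicity 2 l))"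
proof -
  have "2 ^ (multiplicity 2 l) dvd l" by (rule multiplicity_dvd)
  then have "int (2 ^ (multiplicity 2 l)) dvd int l" by (simp only: of_nat_dvd_iff)
  then show ?thesis unfolding val2_ge_def by simp
qed

lemma val2_eq_add: "val2_eq x e \<Longrightarrow> val2_ge y (e + 1) \<Longrightarrow> val2_eq (x+y) e"
proof -
  assume a: "val2_eq x e" "val2_ge y (e + 1)"
  obtain u where u: "odd u" "0 \<le> e" "x = 2 ^ nat e * u" using a(1) unfolding val2_eq_def by blast
  have "(2::int) ^ nat (e + 1) dvd y" using a(2) u(2) unfolding val2_ge_def by auto
  then obtain w where w: "y = 2 ^ nat (e + 1) * w" by blast
  have "x + y = 2 ^ nat e * (u + 2 * w)" using u w by (simp add: nat_add_distrib power_add algebra_simps)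
  moreover have "odd (u + 2 * w)" using u by simp
  ultimately show ?thesis using u unfolding val2_eq_def by blast
qed

lemma val2_ge_add: "val2_ge x e \<Longrightarrow> val2_ge y e \<Longrightarrow> val2_ge (x+y) e"
  unfolding val2_ge_def by auto

lemma val2_ge_sum: "(\<And>i. i \<in> A \<Longrightarrow> val2_ge (g i) e) \<Longrightarrow> val2_ge (sum g A) e"
proof (induction A rule: infinite_finite_induct)
  case (insert x F) then show ?case by (simp add: val2_ge_add)
qed auto

lemma val2_eq_sum:
  assumes "finite A" "i0 \<in> A" "val2_eq (g i0) e" "\<And>i. i \<in> A \<Longrightarrow> i \<noteq> i0 \<Longrightarrow> val2_ge (g i) (e + 1)"
  shows "val2_eq (sum g A) e"
proof -
  have "sum g A = g i0 + sum g (A - {i0})" using assms(1,2) by (simp add: sum.remove)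
  moreover have "val2_ge (sum g (A - {i0})) (e + 1)" using assms(4) by (intro val2_ge_sum) auto
  ultimately show ?thesis using val2_eq_add assms(3) by simp
qed

lemma val2_eq_cong: assumes "val2_eq y e" "(2::int) ^ m dvd (x - y)" "e < int m" shows "val2_eq x e"
proof -
  have "val2_ge (x - y) (int m)" unfolding val2_ge_def using assms(2) by simp
  then have "val2_ge (x - y) (e + 1)" by (rule val2_ge_mono) (use assms(3) in simp)
  then have "val2_eq (y + (x - y)) e" using val2_eq_add assms(1) by blast
  then show ?thesis by simp
qed

lemma val2_eq_not_dvd: "val2_eq x e \<Longrightarrow> \<not> 2^(Suc (nat e)) dvd x"
proof
  assume a: "val2_eq x e" "2^(Suc (nat e)) dvd x"
  obtain u where u: "odd u" "0 \<le> e" "x = 2 ^ nat e * u" using a(1) unfolding val2_eq_def by blast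
  have "(2::int) ^ nat e * 2 dvd 2 ^ nat e * u" using a(2) u by (simp add: mult.commute)
  then have "2 dvd u" using dvd_mult_cancel_left[of "(2::int) ^ nat e" 2 u] by simp
  with u(1) show False by simp
qed

lemma val2_eq_dvd: "val2_eq x e \<Longrightarrow> 2 ^ (nat e) dvd x"
  unfolding val2_eq_def by auto

lemma val2_eq_power2_mult: "val2_eq x e \<Longrightarrow> val2_eq (2 ^ m * x) (int m + e)"
  using val2_eq_mult[OF val2_eq_power2] by simp

lemma val2_eq_multiplicity: "val2_eq x e \<Longrightarrow> multiplicity 2 x = nat e"
  by (rule multiplicity_eqI) (use val2_eq_dvd val2_eq_not_dvd in auto)

lemma v2_of_int_quotient:
  assumes a: "val2_eq a e" and b: "val2_eq b d"
  shows "v2 (of_int a / of_int b) = e - d"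
proof -
  obtain p q where pq: "quotient_of (of_int a / of_int b) = (p, q)"
    by (cases "quotient_of (of_int a / of_int b)")
  have a0: "a \<noteq> 0" and b0: "b \<noteq> 0" using a b unfolding val2_eq_def by auto
  have q0: "q > 0" using quotient_of_denom_pos[OF pq] .
  have "(of_int a / of_int b :: rat) = of_int p / of_int q" using quotient_of_div[OF pq] .
  then have "of_int (a * q) = (of_int (p * b) :: rat)" using a0 b0 q0 by (simp add: field_simps)
  then have aq: "a * q = p * b" by (simp only: of_int_eq_iff)
  then have p0: "p \<noteq> 0" using a0 q0 by auto
  have "multiplicity 2 (a * q) = multiplicity 2 (p * b)" using aq by simp
  then have "multiplicity 2 a + multiplicity 2 q = multiplicity 2 p + multiplicity 2 b"
    using a0 b0 p0 q0 by (simp add: prime_elem_multiplicity_mult_distrib)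
  moreover have "int (multiplicity 2 a) = e" "int (multiplicity 2 b) = d"
    using val2_eq_multiplicity val2_eq_nonneg a b by auto
  ultimately show ?thesis unfolding v2_def pq by simp
qed


section \<open>Products of monic linear polynomials\<close>

lemma coeff_mult_monic_linear:
  "coeff ((p::'a::comm_ring_1 poly) * [:a, 1:]) k = a * coeff p k + (if k = 0 then 0 else coeff p (k - 1))"
proof -
  have "p * [:a, 1:] = smult a p + pCons 0 p"
    by (simp add: mult_pCons_right smult_1_left)
  then show ?thesis by (cases k) auto
qed

lemma coeff_prod_monic_linear_top:
  "coeff (\<Prod>i<m. [:c i, 1:]) m = 1 \<and> (\<forall>k>m. coeff (\<Prod>i<m. [:c i, 1::'a::comm_ring_1:]) k = 0)"
proof (induction m)
  case 0 then show ?case by (simp add: coeff_1)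
next
  case (Suc m)
  show ?case
  proof
    show "coeff (\<Prod>i<Suc m. [:c i, 1:]) (Suc m) = 1" using Suc by (simp add: coeff_mult_monic_linear)
    show "\<forall>k>Suc m. coeff (\<Prod>i<Suc m. [:c i, 1:]) k = 0"
    proof (intro allI impI)
      fix k assume k: "Suc m < k"
      have "coeff (\<Prod>i<Suc m. [:c i, 1:]) k = c m * coeff (\<Prod>i<m. [:c i, 1:]) k + coeff (\<Prod>i<m. [:c i, 1:]) (k - 1)"
        using k by (simp only: prod.lessThan_Suc coeff_mult_monic_linear) simp
      then show "coeff (\<Prod>i<Suc m. [:c i, 1:]) k = 0" using Suc k by simp
    qed
  qed
qed

lemma coeff_prod_monic_linear_scale:
  "coeff (\<Prod>i<m. [:d * c i, 1::'a::comm_ring_1:]) k = d ^ (m - k) * coeff (\<Prod>i<m. [:c i, 1:]) k"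
proof (induction m arbitrary: k)
  case 0 then show ?case by (cases k) (auto simp: coeff_1)
next
  case (Suc m)
  define Q where "Q = (\<Prod>i<m. [:d * c i, 1::'a:])"
  define P where "P = (\<Prod>i<m. [:c i, 1::'a:])"
  have z: "\<And>k. k > m \<Longrightarrow> coeff P k = 0" using coeff_prod_monic_linear_top[of c m] P_def by auto
  have IH: "\<And>k. coeff Q k = d ^ (m - k) * coeff P k" using Suc Q_def P_def by simp
  have e1: "coeff (\<Prod>i<Suc m. [:d * c i, 1:]) k = d * c m * coeff Q k + (if k = 0 then 0 else coeff Q (k - 1))"
    unfolding Q_def by (simp only: prod.lessThan_Suc coeff_mult_monic_linear)
  have e2: "coeff (\<Prod>i<Suc m. [:c i, 1:]) k = c m * coeff P k + (if k = 0 then 0 else coeff P (k - 1))"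
    unfolding P_def by (simp only: prod.lessThan_Suc coeff_mult_monic_linear)
  show ?case
  proof (cases "k = 0")
    case True then show ?thesis using e1 e2 IH by (simp add: algebra_simps)
  next
    case False
    show ?thesis
    proof (cases "k \<le> m")
      case True
      have "Suc m - k = Suc (m - k)" using True by simp
      moreover have "m - (k - 1) = Suc (m - k)" using True False by simp
      ultimately show ?thesis using e1 e2 IH False by (simp add: algebra_simps)
    next
      case gt: False
      then have "coeff P k = 0" using z by simp
      moreover have "m - (k - 1) = 0" "Suc m - k = 0" using gt by auto
      ultimately show ?thesis using e1 e2 IH False by (simp add: algebra_simps)
    qed
  qed
qed

lemma prod_lessThan_double:
  "(\<Prod>i<2 * (m::nat). (g i :: 'a::comm_monoid_mult)) = (\<Prod>i<m. g (2 * i) * g (2 * i + 1))"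
  by (induction m) (simp_all add: mult.assoc)

lemma prod_lessThan_pair_ends:
  "(\<Prod>i<2 * (K::nat). (g i :: 'a::comm_monoid_mult)) = (\<Prod>i<K. g i * g (2 * K - 1 - i))"
proof -
  have un: "{..<2 * K} = {..<K} \<union> {K..<2 * K}" by auto
  have "(\<Prod>i<2 * K. g i) = (\<Prod>i<K. g i) * (\<Prod>i\<in>{K..<2 * K}. g i)"
    by (subst un, rule prod.union_disjoint) auto
  moreover have "(\<Prod>i\<in>{K..<2 * K}. g i) = (\<Prod>i<K. g (2 * K - 1 - i))"
  proof (rule prod.reindex_bij_witness[of _ "\<lambda>i. 2 * K - 1 - i" "\<lambda>i. 2 * K - 1 - i"])
  qed auto
  ultimately show ?thesis by (simp add: prod.distrib)
qed

lemma sum_atMost_pair_ends: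
  "(\<Sum>i\<le>(m::nat). g i) = (\<Sum>i\<in>{i. 2 * i < m}. g i + g (m - i)) + (if even m then g (m div 2) else 0)"
proof -
  define L where "L = {i. 2 * i < m}"
  define R where "R = {i. i \<le> m \<and> m < 2 * i}"
  define C where "C = {i. 2 * i = m}"
  have fin: "finite L" "finite R" "finite C" unfolding L_def R_def C_def
    by (auto intro: finite_subset[of _ "{..m}"])
  have un: "{..m} = L \<union> (R \<union> C)" unfolding L_def R_def C_def by auto
  have d1: "L \<inter> (R \<union> C) = {}" "R \<inter> C = {}" unfolding L_def R_def C_def by auto
  have "(\<Sum>i\<le>m. g i) = sum g L + (sum g R + sum g C)"
    by (subst un, subst sum.union_disjoint, use fin d1 in auto, subst sum.union_disjoint) (use fin d1 in auto)
  moreover have "sum g R = (\<Sum>i\<in>L. g (m - i))"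
    by (rule sum.reindex_bij_witness[of _ "\<lambda>i. m - i" "\<lambda>i. m - i"]) (auto simp: L_def R_def)
  moreover have "sum g C = (if even m then g (m div 2) else 0)"
  proof (cases "even m")
    case True then have "C = {m div 2}" unfolding C_def by auto
    then show ?thesis using True by simp
  next
    case False then have "C = {}" unfolding C_def by auto
    then show ?thesis using False by simp
  qed
  ultimately show ?thesis unfolding L_def by (simp add: sum.distrib add.assoc)
qed

lemma coeff_0_prod_monic_linear: "coeff (\<Prod>i<m. [:c i, 1::'a::comm_ring_1:]) 0 = (\<Prod>i<m. c i)"
  by (simp add: poly_0_coeff_0[symmetric] poly_prod)

lemma dvd_mult_diff:
  fixes d :: "'a::comm_ring_1"
  assumes "d dvd a - c" "d dvd b - e"
  shows "d dvd a * b - c * e"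
proof -
  have "a * b - c * e = a * (b - e) + (a - c) * e" by (simp add: algebra_simps)
  then show ?thesis using assms by simp
qed

lemma dvd_prod_diff:
  fixes f g :: "'b \<Rightarrow> 'a::comm_ring_1"
  shows "(\<And>i. i \<in> A \<Longrightarrow> d dvd f i - g i) \<Longrightarrow> d dvd prod f A - prod g A"
proof (induction A rule: infinite_finite_induct)
  case (insert x A)
  then show ?case by (simp add: dvd_mult_diff)
qed auto

lemma const_poly_dvd_linear_diff: "m dvd a - b \<Longrightarrow> [:m:] dvd [:a, 1:] - [:b, 1::'a::idom:]"
  by (simp add: const_poly_dvd_iff coeff_pCons split: nat.split)


section \<open>The paired polynomial\<close>

text \<open>Pairing \<open>x + j\<close> with \<open>x + (2^n - j)\<close> for odd \<open>j < 2^(n-1)\<close> gives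
  \<open>(\<Prod>j odd. (x + j)) = paired_poly n \<circ> (x^2 + 2^n x)\<close>.\<close>

definition paired_poly :: "nat \<Rightarrow> int poly" where
  "paired_poly n = (\<Prod>i<2 ^ (n - 2). [:(2 * int i + 1) * (2 ^ n - (2 * int i + 1)), 1:])"

lemma coeff_paired_poly_top:
  "coeff (paired_poly n) (2 ^ (n - 2)) = 1" "l > 2 ^ (n - 2) \<Longrightarrow> coeff (paired_poly n) l = 0"
  using coeff_prod_monic_linear_top[of "\<lambda>i. (2 * int i + 1) * (2 ^ n - (2 * int i + 1))" "2 ^ (n - 2)"]
  unfolding paired_poly_def by auto

lemma paired_poly_coeff_0_odd: "1 \<le> n \<Longrightarrow> odd (coeff (paired_poly n) 0)"
  unfolding paired_poly_def coeff_0_prod_monic_linear by (simp add: even_prod_iff)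

lemma int_reflect_odd: "i < K \<Longrightarrow> 2 * int (2 * K - 1 - i) + 1 = 4 * int K - 2 * int i - 1"
  by (simp add: of_nat_diff)

lemma sum_atMost_convolution_square:
  fixes t :: "nat \<Rightarrow> 'a::comm_semiring_1"
  shows "(\<Sum>i\<le>m. t i * t (m - i))
         = (\<Sum>i | 2 * i < m. 2 * t i * t (m - i)) + (if even m then t (m div 2) * t (m div 2) else 0)"
proof -
  have "(\<Sum>i\<le>m. t i * t (m - i)) = (\<Sum>i | 2 * i < m. t i * t (m - i) + t (m - i) * t (m - (m - i)))
          + (if even m then t (m div 2) * t (m - m div 2) else 0)"
    by (rule sum_atMost_pair_ends)
  moreover have "(\<Sum>i | 2 * i < m. t i * t (m - i) + t (m - i) * t (m - (m - i)))
                 = (\<Sum>i | 2 * i < m. 2 * t i * t (m - i))"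
    by (rule sum.cong) (auto simp: mult_2 algebra_simps)
  moreover have "even m \<Longrightarrow> m - m div 2 = m div 2" by auto
  ultimately show ?thesis by simp
qed

text \<open>Applied below to the coefficients of \<open>paired_poly N\<close>: squaring turns the valuation pattern
  \<open>N - 2 - v\<^sub>2(i)\<close> into \<open>N - 1 - v\<^sub>2(m)\<close>, the pattern of \<open>paired_poly (N + 1)\<close>.\<close>

context
  fixes t :: "nat \<Rightarrow> int" and N K :: nat
  assumes N: "2 \<le> N" and K: "K = 2 ^ (N - 2)" and t0: "odd (t 0)"
    and tv: "\<And>i. 1 \<le> i \<Longrightarrow> i \<le> K \<Longrightarrow> val2_eq (t i) (int N - 2 - int (multiplicity 2 i))"
    and tz: "\<And>i. K < i \<Longrightarrow> t i = 0"
begin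

lemma convolution_square_mixed_term:
  assumes i: "1 \<le> i" "2 * i < m" "m - i < K"
  shows "val2_ge (2 * t i * t (m - i)) (int N - int (multiplicity 2 m))"
proof -
  have "m - i < 2 ^ (N - 2)" "i < 2 ^ (N - 2)" using i K by auto
  then have v: "multiplicity 2 i \<le> N - 3" "multiplicity 2 (m - i) \<le> N - 3"
    using multiplicity2_less[of i "N - 2"] multiplicity2_less[of "m - i" "N - 2"] i by auto
  have N3: "3 \<le> N" using i K N by (cases "N = 2") auto
  have "multiplicity 2 i + multiplicity 2 (m - i) \<le> N - 3 + multiplicity 2 (i + (m - i))"
    using multiplicity2_add_bound[OF _ _ v] i by simp
  then have "int N - int (multiplicity 2 m)
             \<le> 1 + (int N - 2 - int (multiplicity 2 i)) + (int N - 2 - int (multiplicity 2 (m - i)))"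
    using N3 i by simp
  moreover have "val2_eq (2 * t i * t (m - i))
                   (1 + (int N - 2 - int (multiplicity 2 i)) + (int N - 2 - int (multiplicity 2 (m - i))))"
    using val2_eq_mult[OF val2_eq_mult[OF val2_eq_power2[of 1] tv] tv] i by simp
  ultimately show ?thesis using val2_ge_mono val2_eq_imp_ge by blast
qed

lemma convolution_square_middle_term:
  assumes m: "1 \<le> m" "m < 2 * K"
  shows "val2_ge (if even m then t (m div 2) * t (m div 2) else 0) (int N - int (multiplicity 2 m))"
proof (cases "even m")
  case True
  then have h: "1 \<le> m div 2" "m div 2 \<le> K" "multiplicity 2 m = Suc (multiplicity 2 (m div 2))"
    using m multiplicity2_double[of "m div 2"] by auto
  have "2 * K = 2 ^ (N - 1)" using K power_pred[of "N - 1" "2::nat"] N by simp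
  then have "multiplicity 2 m \<le> N - 2" using multiplicity2_less[of m "N - 1"] m by simp
  then have "int N - int (multiplicity 2 m) \<le> 2 * (int N - 2 - int (multiplicity 2 (m div 2)))"
    using h N by simp
  moreover have "val2_eq (t (m div 2) * t (m div 2)) (2 * (int N - 2 - int (multiplicity 2 (m div 2))))"
    using val2_eq_mult[OF tv[of "m div 2"] tv[of "m div 2"]] h by (simp add: algebra_simps)
  ultimately have "val2_ge (t (m div 2) * t (m div 2)) (int N - int (multiplicity 2 m))"
    using val2_ge_mono val2_eq_imp_ge by blast
  then show ?thesis using True by simp
qed simp

lemma convolution_square_leading_term:
  assumes m: "1 \<le> m" "m < 2 * K"
  defines "i0 \<equiv> if m \<le> K then 0 else m - K"
  shows "val2_eq (2 * t i0 * t (m - i0)) (int N - 1 - int (multiplicity 2 m))"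
proof (cases "m \<le> K")
  case True
  have "val2_eq (2 * t 0 * t m) (1 + 0 + (int N - 2 - int (multiplicity 2 m)))"
    using val2_eq_mult[OF val2_eq_mult[OF val2_eq_power2[of 1] val2_eq_odd[OF t0]] tv] m True by simp
  then show ?thesis using True unfolding i0_def by (simp add: algebra_simps)
next
  case False
  have mk: "1 \<le> m - K" "m - K < K" "multiplicity 2 K = N - 2" using False m K by auto
  have "multiplicity 2 (m - K) < multiplicity 2 K" using multiplicity2_less[of "m - K" "N - 2"] mk K by simp
  then have "multiplicity 2 m = multiplicity 2 (m - K)"
    using multiplicity2_add_less[of "m - K" K] mk False by simp
  moreover have "val2_eq (2 * t (m - K) * t K) (1 + (int N - 2 - int (multiplicity 2 (m - K))) + 0)"
    using val2_eq_mult[OF val2_eq_mult[OF val2_eq_power2[of 1] tv] tv[of K]] mk N K by simp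
  ultimately show ?thesis using False unfolding i0_def by (simp add: algebra_simps)
qed

lemma convolution_square_val:
  assumes m: "1 \<le> m" "m \<le> 2 * K"
  shows "val2_eq (\<Sum>i\<le>m. t i * t (m - i)) (int N - 1 - int (multiplicity 2 m))"
proof (cases "m = 2 * K")
  case True
  have "(\<Sum>i | 2 * i < m. 2 * t i * t (m - i)) = 0" using True tz by (intro sum.neutral) auto
  then have "(\<Sum>i\<le>m. t i * t (m - i)) = t K * t K"
    using True sum_atMost_convolution_square[of t m] by simp
  moreover have "val2_eq (t K * t K) 0" using val2_eq_mult[OF tv[of K] tv[of K]] K N by simp
  moreover have "m = 2 ^ Suc (N - 2)" using True K by simp
  then have "multiplicity 2 m = Suc (N - 2)" by (simp only: multiplicity2_power2)
  then have "multiplicity 2 m = N - 1" using N by simp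
  ultimately show ?thesis using N by simp
next
  case False
  define i0 where "i0 = (if m \<le> K then 0 else m - K)"
  have fin: "finite {i. 2 * i < m}" by (rule finite_subset[of _ "{..m}"]) auto
  have "val2_ge (2 * t i * t (m - i)) (int N - 1 - int (multiplicity 2 m) + 1)"
    if "2 * i < m" "i \<noteq> i0" for i
  proof (cases "m - i < K")
    case True
    then have "1 \<le> i" using that i0_def by (cases "i = 0") auto
    then show ?thesis using convolution_square_mixed_term True that by simp
  next
    case False
    then have "K < m - i" using that i0_def by (cases "m \<le> K") auto
    then show ?thesis using tz by simp
  qed
  then have "val2_eq (\<Sum>i | 2 * i < m. 2 * t i * t (m - i)) (int N - 1 - int (multiplicity 2 m))"
    using convolution_square_leading_term[of m] m False fin unfolding i0_def
    by (intro val2_eq_sum[of _ i0]) (auto simp: i0_def)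
  then show ?thesis using convolution_square_middle_term[of m] m False val2_eq_add
    sum_atMost_convolution_square[of t m] by simp
qed

end

lemma paired_poly_Suc_cong:
  assumes n: "2 \<le> n" shows "[:2 ^ n:] dvd paired_poly (Suc n) - paired_poly n * paired_poly n"
proof -
  define K where "K = (2::nat) ^ (n - 2)"
  define N where "N = (2::int) ^ n"
  define c where "c M j = [:j * (M - j), 1:]" for M j :: int
  have N4: "(2::nat) ^ n = 4 * K" using two_power_quadruple[OF n] K_def by simp
  have "Suc n - 2 = Suc (n - 2)" using n by simp
  then have NK: "N = 4 * int K" "(2::int) ^ Suc n = 2 * N" "(2::nat) ^ (Suc n - 2) = 2 * K"
    using arg_cong[where f = int, OF N4] unfolding N_def K_def by simp_all
  have "paired_poly (Suc n) = (\<Prod>i<2 * K. c (2 * N) (2 * int i + 1))"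
    unfolding paired_poly_def c_def NK by simp
  also have "\<dots> = (\<Prod>i<K. c (2 * N) (2 * int i + 1) * c (2 * N) (N - (2 * int i + 1)))"
    unfolding prod_lessThan_pair_ends using int_reflect_odd NK by (intro prod.cong) (auto simp: algebra_simps)
  finally have e1: "paired_poly (Suc n) = \<dots>" .
  have e2: "paired_poly n * paired_poly n = (\<Prod>i<K. c N (2 * int i + 1) * c N (2 * int i + 1))"
    unfolding paired_poly_def c_def K_def N_def prod.distrib ..
  have "j * (2 * N - j) - j * (N - j) = N * j" "(N - j) * (2 * N - (N - j)) - j * (N - j) = N * (N - j)" for j
    by (simp_all add: algebra_simps)
  then have "[:2 ^ n:] dvd c (2 * N) j - c N j" "[:2 ^ n:] dvd c (2 * N) (N - j) - c N j" for j
    unfolding c_def by (auto intro!: const_poly_dvd_linear_diff simp: N_def)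
  then show ?thesis unfolding e1 e2 by (intro dvd_prod_diff dvd_mult_diff)
qed

lemma paired_poly_coeff_val:
  "2 \<le> n \<Longrightarrow> 1 \<le> l \<Longrightarrow> l \<le> 2 ^ (n - 2) \<Longrightarrow>
    val2_eq (coeff (paired_poly n) l) (int n - 2 - int (multiplicity 2 l))"
proof (induction n arbitrary: l rule: nat_induct_at_least)
  case base
  then have "l = 1" by simp
  then show ?case using coeff_paired_poly_top(1)[of 2] val2_eq_odd[of 1] by simp
next
  case (Suc n)
  define t where "t = coeff (paired_poly n)"
  have K2: "2 * 2 ^ (n - 2) = (2::nat) ^ (Suc n - 2)"
    using two_power_pred_double[OF Suc.hyps] by simp
  have sq: "val2_eq (\<Sum>i\<le>l. t i * t (l - i)) (int n - 1 - int (multiplicity 2 l))"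
  proof (rule convolution_square_val[where K="2 ^ (n - 2)"])
    show "2 \<le> n" by (rule Suc.hyps)
    show "odd (t 0)" using paired_poly_coeff_0_odd Suc.hyps t_def by simp
    show "\<And>i. 1 \<le> i \<Longrightarrow> i \<le> 2 ^ (n - 2) \<Longrightarrow> val2_eq (t i) (int n - 2 - int (multiplicity 2 i))"
      using Suc.IH t_def by simp
    show "\<And>i. 2 ^ (n - 2) < i \<Longrightarrow> t i = 0" using coeff_paired_poly_top(2) t_def by simp
    show "1 \<le> l" by (rule Suc.prems(1))
    show "l \<le> 2 * 2 ^ (n - 2)" using Suc.prems(2) K2 by simp
  qed simp
  then have sq': "val2_eq (coeff (paired_poly n * paired_poly n) l) (int n - 1 - int (multiplicity 2 l))"
    by (simp add: coeff_mult t_def)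
  have "val2_eq (coeff (paired_poly (Suc n)) l) (int n - 1 - int (multiplicity 2 l))"
  proof (rule val2_eq_cong[OF sq'])
    show "2 ^ n dvd coeff (paired_poly (Suc n)) l - coeff (paired_poly n * paired_poly n) l"
      using paired_poly_Suc_cong[OF Suc.hyps] unfolding const_poly_dvd_iff by simp
    show "int n - 1 - int (multiplicity 2 l) < int n" by simp
  qed
  then show ?case by simp
qed


section \<open>Valuations of the coefficients of \<open>\<Prod>i=1..2^n. (x + i)\<close>\<close>

definition odd_poly :: "nat \<Rightarrow> int poly" where
  "odd_poly n = (\<Prod>i<2 ^ (n - 1). [:2 * int i + 1, 1:])"

lemma odd_poly_pcompose:
  assumes n: "2 \<le> n" shows "odd_poly n = pcompose (paired_poly n) [:0, 2 ^ n, 1:]"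
proof -
  define K where "K = (2::nat) ^ (n - 2)"
  define N where "N = (2::int) ^ n"
  have N4: "(2::nat) ^ n = 4 * K" using two_power_quadruple[OF n] K_def by simp
  have NK: "N = 4 * int K" "(2::nat) ^ (n - 1) = 2 * K"
    using arg_cong[where f = int, OF N4] two_power_pred_double[OF n] unfolding N_def K_def by simp_all
  have "odd_poly n = (\<Prod>i<K. [:2 * int i + 1, 1:] * [:N - (2 * int i + 1), 1:])"
    unfolding odd_poly_def NK prod_lessThan_pair_ends using int_reflect_odd NK
    by (intro prod.cong) (auto simp: algebra_simps)
  also have "\<dots> = (\<Prod>i<K. [:(2 * int i + 1) * (N - (2 * int i + 1)), N, 1:])"
    by (intro prod.cong) (simp_all add: algebra_simps)
  also have "\<dots> = pcompose (paired_poly n) [:0, N, 1:]"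
    unfolding paired_poly_def K_def[symmetric] N_def[symmetric] pcompose_prod
    by (rule prod.cong) (simp_all add: pcompose_pCons)
  finally show ?thesis unfolding N_def .
qed

lemma coeff_pcompose_sum: "coeff (pcompose p q) a = (\<Sum>l\<le>degree p. coeff p l * coeff (q ^ l) a)"
proof -
  have "pcompose p q = (\<Sum>l\<le>degree p. [:coeff p l:] * q ^ l)"
    unfolding pcompose_altdef poly_altdef by (simp add: degree_map_poly coeff_map_poly)
  then show ?thesis by (simp add: coeff_sum)
qed

lemma coeff_power_monic_quadratic:
  "coeff ([:0, c, 1:] ^ l) a =
    (if l \<le> a \<and> a \<le> 2 * l then of_nat (l choose (a - l)) * c ^ (2 * l - a) else (0::'a::comm_ring_1))"
proof -
  have h: "[:0, c, 1:] = [:0, 1:] * [:c, 1::'a:]" by simp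
  have "[:0, c, 1:]^l = [:0, 1:]^l * [:c, 1::'a:]^l" by (subst h, rule power_mult_distrib)
  moreover have "monom (1::'a) l = [:0, 1:]^l" by (simp add: monom_altdef)
  ultimately have "[:0, c, 1:]^l = monom 1 l * [:c, 1::'a:]^l" by simp
  then have e: "coeff ([:0, c, 1:]^l) a = (if a < l then 0 else coeff ([:c, 1::'a:]^l) (a - l))"
    by (simp add: coeff_monom_mult)
  have dg: "degree ([:c, 1::'a:]^l) \<le> l" using degree_power_le[of "[:c, 1::'a:]" l] by simp
  show ?thesis
  proof (cases "l \<le> a \<and> a \<le> 2 * l")
    case True
    then have "a - l \<le> l" by arith
    moreover have "l - (a - l) = 2 * l - a" using True by arith
    ultimately show ?thesis using e True coeff_linear_poly_power[of "a-l" l c 1] by simp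
  next
    case False
    show ?thesis
    proof (cases "a < l")
      case True then show ?thesis using e by simp
    next
      case nl: False
      then have "l < a - l" using False by simp
      then have "coeff ([:c, 1::'a:]^l) (a - l) = 0" using dg by (intro coeff_eq_0) simp
      then show ?thesis using e nl False by simp
    qed
  qed
qed

lemma degree_paired_poly: "degree (paired_poly n) = 2 ^ (n - 2)"
proof (rule antisym)
  show "degree (paired_poly n) \<le> 2 ^ (n - 2)" by (rule degree_le) (use coeff_paired_poly_top(2) in auto)
  show "2 ^ (n - 2) \<le> degree (paired_poly n)" by (rule le_degree) (use coeff_paired_poly_top(1) in simp)
qed

definition odd_poly_term :: "nat \<Rightarrow> nat \<Rightarrow> nat \<Rightarrow> int" where
  "odd_poly_term n a l = coeff (paired_poly n) l *
     (if l \<le> a \<and> a \<le> 2 * l then int (l choose (a - l)) * 2 ^ (n * (2 * l - a)) else 0)"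

lemma odd_poly_coeff:
  "2 \<le> n \<Longrightarrow> coeff (odd_poly n) a = (\<Sum>l\<le>2 ^ (n - 2). odd_poly_term n a l)"
  unfolding odd_poly_pcompose coeff_pcompose_sum degree_paired_poly coeff_power_monic_quadratic
    odd_poly_term_def
  by (intro sum.cong) (auto simp: power_mult)

lemma odd_poly_term_val_ge: "val2_ge (odd_poly_term n a l) (int (n * (2 * l - a)))"
proof (cases "l \<le> a \<and> a \<le> 2 * l")
  case True
  then have "odd_poly_term n a l = 2 ^ (n * (2 * l - a)) * (coeff (paired_poly n) l * int (l choose (a - l)))"
    unfolding odd_poly_term_def by simp
  then show ?thesis using val2_ge_power2_mult by metis
qed (auto simp: odd_poly_term_def)

lemma odd_poly_coeff_0_odd: "odd (coeff (odd_poly n) 0)"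
  unfolding odd_poly_def coeff_0_prod_monic_linear by (simp add: even_prod_iff)

lemma coeff_odd_poly_top: "a > 2 ^ (n - 1) \<Longrightarrow> coeff (odd_poly n) a = 0"
  using coeff_prod_monic_linear_top[of "\<lambda>i. 2 * int i + 1" "2 ^ (n - 1)"] unfolding odd_poly_def by auto

lemma odd_poly_coeff_even:
  assumes n: "2 \<le> n" and a: "even a" "2 \<le> a" "a \<le> 2 ^ (n - 1)"
  shows "val2_eq (coeff (odd_poly n) a) (int n - 1 - int (multiplicity 2 a))"
proof -
  define l0 where "l0 = a div 2"
  have l0: "a = 2 * l0" "1 \<le> l0" "l0 \<le> 2 ^ (n - 2)" using a two_power_pred_double[OF n] l0_def by auto
  have "multiplicity 2 a = Suc (multiplicity 2 l0)" using l0 multiplicity2_double[of l0] by simp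
  then have "val2_eq (odd_poly_term n a l0) (int n - 1 - int (multiplicity 2 a))"
    using paired_poly_coeff_val[OF n l0(2,3)] l0(1) unfolding odd_poly_term_def
    by (simp add: algebra_simps)
  moreover have "val2_ge (odd_poly_term n a l) (int n - 1 - int (multiplicity 2 a) + 1)" if "l \<noteq> l0" for l
  proof -
    have "int n - 1 - int (multiplicity 2 a) + 1 \<le> int (n * (2 * l - a))" if "l \<le> a \<and> a \<le> 2 * l"
    proof -
      have "n * 2 \<le> n * (2 * l - a)" using that \<open>l \<noteq> l0\<close> l0(1) by auto
      then show ?thesis by linarith
    qed
    then show ?thesis using odd_poly_term_val_ge[of n a l] val2_ge_mono
      by (cases "l \<le> a \<and> a \<le> 2 * l") (auto simp: odd_poly_term_def)
  qed
  ultimately show ?thesis unfolding odd_poly_coeff[OF n] using l0 by (intro val2_eq_sum) auto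
qed

lemma odd_poly_coeff_odd:
  assumes n: "2 \<le> n" and a: "odd a"
  shows "val2_ge (coeff (odd_poly n) a) (2 * int n - 2)"
proof -
  have "val2_ge (odd_poly_term n a l) (2 * int n - 2)" if l: "l \<le> 2 ^ (n - 2)" for l
  proof (cases "l \<le> a \<and> a \<le> 2 * l")
    case True
    show ?thesis
    proof (cases "2 * l - a = 1")
      case True
      then have l1: "1 \<le> l" "a - l = l - 1" using \<open>l \<le> a \<and> a \<le> 2 * l\<close> by auto
      then have "l choose (a - l) = l" using binomial_symmetric[of "l - 1" l] by simp
      have "val2_ge (coeff (paired_poly n) l) (int n - 2 - int (multiplicity 2 l))"
        using paired_poly_coeff_val[OF n l1(1) l] val2_eq_imp_ge by simp
      then have "val2_ge (coeff (paired_poly n) l * int l) (int n - 2 - int (multiplicity 2 l) + int (multiplicity 2 l))"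
        by (rule val2_ge_mult[OF _ val2_ge_multiplicity]) (use multiplicity2_le[OF _ l] l1 n in auto)
      then have "val2_ge (2 ^ n * (coeff (paired_poly n) l * int l)) (int n + (int n - 2))"
        using val2_ge_mult[OF val2_eq_imp_ge[OF val2_eq_power2]] n by fastforce
      then show ?thesis using True \<open>l \<le> a \<and> a \<le> 2 * l\<close> \<open>l choose (a - l) = l\<close>
        unfolding odd_poly_term_def
        by (simp add: algebra_simps)
    next
      case False
      then have "n * 3 \<le> n * (2 * l - a)" using True a by simp presburger
      then have "2 * int n - 2 \<le> int (n * (2 * l - a))" by linarith
      then show ?thesis using odd_poly_term_val_ge[of n a l] val2_ge_mono by blast
    qed
  qed (auto simp: odd_poly_term_def)
  then show ?thesis unfolding odd_poly_coeff[OF n] by (intro val2_ge_sum) auto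
qed

definition even_poly :: "nat \<Rightarrow> int poly" where
  "even_poly n = (\<Prod>i<2 ^ (n - 1). [:2 * int (i + 1), 1:])"

definition rising_poly :: "nat \<Rightarrow> int poly" where
  "rising_poly n = (\<Prod>i<2 ^ n. [:int (i + 1), 1:])"

lemma rising_poly_split: assumes "1 \<le> n" shows "rising_poly n = odd_poly n * even_poly n"
proof -
  have "(2::nat) ^ n = 2 * 2 ^ (n - 1)" using power_pred[of n "2::nat"] assms by simp
  then have "rising_poly n = (\<Prod>i<2 ^ (n - 1). [:int (2 * i + 1), 1:] * [:int (2 * i + 1+1), 1:])"
    unfolding rising_poly_def by (simp only: prod_lessThan_double)
  also have "\<dots> = (\<Prod>i<2 ^ (n - 1). [:2 * int i + 1, 1:] * [:2 * int (i + 1), 1:])"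
    by (rule prod.cong) simp_all
  also have "\<dots> = odd_poly n * even_poly n" unfolding odd_poly_def even_poly_def by (rule prod.distrib)
  finally show ?thesis .
qed

lemma even_poly_coeff: "coeff (even_poly n) b = 2^(2 ^ (n - 1) - b) * coeff (rising_poly (n-1)) b"
  unfolding even_poly_def rising_poly_def by (rule coeff_prod_monic_linear_scale)

lemma coeff_rising_poly_top: "k > 2 ^ n \<Longrightarrow> coeff (rising_poly n) k = 0"
  using coeff_prod_monic_linear_top[where m="2 ^ n" and c="\<lambda>i. int (i + 1)"] unfolding rising_poly_def by auto

definition rising_val :: "nat \<Rightarrow> nat \<Rightarrow> int" where
  "rising_val n k = 2 ^ n - int n * int k + kappa k"

lemma odd_poly_coeff_val:
  assumes n: "2 \<le> n" and aM: "a \<le> 2 ^ (n - 1)"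
  shows "val2_ge (coeff (odd_poly n) a) (odd_poly_val n a)"
    and "a = 0 \<or> (even a \<and> 2 \<le> a) \<Longrightarrow> val2_eq (coeff (odd_poly n) a) (odd_poly_val n a)"
proof -
  have exact: "val2_eq (coeff (odd_poly n) a) (odd_poly_val n a)" if "a = 0 \<or> (even a \<and> 2 \<le> a)"
    using that odd_poly_coeff_0_odd[of n] val2_eq_odd odd_poly_coeff_even[OF n _ _ aM]
    unfolding odd_poly_val_def by auto
  then show "a = 0 \<or> (even a \<and> 2 \<le> a) \<Longrightarrow> val2_eq (coeff (odd_poly n) a) (odd_poly_val n a)" .
  show "val2_ge (coeff (odd_poly n) a) (odd_poly_val n a)"
  proof (cases "odd a")
    case True
    then show ?thesis using odd_poly_coeff_odd[OF n True] unfolding odd_poly_val_def by auto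
  next
    case False
    then have "a = 0 \<or> (even a \<and> 2 \<le> a)" by (cases "a = 1") auto
    then show ?thesis using exact val2_eq_imp_ge by blast
  qed
qed

lemma rising_val_split:
  assumes n1: "1 \<le> n" and bM: "b \<le> 2 ^ (n - 1)" and bk: "b \<le> k"
  shows "odd_poly_val n (k - b) + (int (2 ^ (n - 1) - b) + rising_val (n - 1) b)
         = rising_val n k + (int n * int (k - b) + odd_poly_val n (k - b) - (kappa k - kappa b))"
proof -
  have "(2::int) ^ n = 2 * 2 ^ (n - 1)" using power_pred[of n "2::int"] n1 by simp
  then show ?thesis using bM bk n1 unfolding rising_val_def by (simp add: of_nat_diff algebra_simps)
qed

lemma three_le_power_two_add: "2 \<le> P \<Longrightarrow> 3 * P \<le> (2::nat) ^ P + 2"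
proof (induction P rule: nat_induct_at_least)
  case (Suc P)
  then show ?case by simp
qed simp

lemma rising_val_diff_le:
  assumes "1 \<le> k" "k \<le> 2 ^ n"
  shows "rising_val n k - rising_val n 0 \<le> - int n"
proof -
  define P where "P = ceillog2 k"
  have Pn: "P \<le> n" using ceillog2_le assms P_def by simp
  have "(int n - int P) * 1 \<le> (int n - int P) * int k" using Pn assms by (intro mult_left_mono) auto
  moreover have kap: "kappa k = int k * int P - 2 ^ P + kappa_corr k" "kappa 0 = -1"
    unfolding kappa_def P_def using assms by simp_all
  moreover have "kappa k + 1 - int k * int P \<le> - int P"
  proof (cases "2 \<le> P")
    case True
    have "int (3 * P) \<le> int (2 ^ P + 2)" using three_le_power_two_add True by (simp only: of_nat_le_iff)
    then show ?thesis using kap kappa_corr_bounds(2)[of k] True P_def by simp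
  next
    case False
    have "(2::nat) ^ P \<le> 2 ^ 1" using False by (intro power_increasing) auto
    moreover have "k \<le> 2 ^ P" using le_two_power_ceillog2 P_def by simp
    ultimately have "k = 1 \<or> k = 2" using assms by auto
    then show ?thesis using kappa_small_values P_def by auto
  qed
  ultimately show ?thesis unfolding rising_val_def by (simp add: algebra_simps)
qed

lemma rising_poly_summand_val:
  assumes n: "2 \<le> n" and a: "a \<le> k" "a \<le> 2 ^ (n - 1)" "k - a \<le> 2 ^ (n - 1)"
    and IH: "val2_eq (coeff (rising_poly (n - 1)) (k - a)) (rising_val (n - 1) (k - a))"
  defines "g \<equiv> coeff (odd_poly n) a * (2 ^ (2 ^ (n - 1) - (k - a)) * coeff (rising_poly (n - 1)) (k - a))"
    and "e \<equiv> rising_val n k + (int n * int a + odd_poly_val n a - (kappa k - kappa (k - a)))"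
  shows "val2_ge g e" and "a = 0 \<or> (even a \<and> 2 \<le> a) \<Longrightarrow> val2_eq g e"
proof -
  define f where "f = 2 ^ (2 ^ (n - 1) - (k - a)) * coeff (rising_poly (n - 1)) (k - a)"
  have "val2_eq f (int (2 ^ (n - 1) - (k - a)) + rising_val (n - 1) (k - a))"
    unfolding f_def by (rule val2_eq_power2_mult[OF IH])
  moreover have "int (2 ^ (n - 1) - (k - a)) + rising_val (n - 1) (k - a) = e - odd_poly_val n a"
    using rising_val_split[of n "k - a" k] n a unfolding e_def by simp
  ultimately have f: "val2_eq f (e - odd_poly_val n a)" by simp
  have "val2_ge (coeff (odd_poly n) a * f) (odd_poly_val n a + (e - odd_poly_val n a))"
    by (rule val2_ge_mult[OF odd_poly_coeff_val(1)[OF n a(2)] val2_eq_imp_ge[OF f]])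
      (use odd_poly_val_nonneg[of a n] val2_eq_nonneg[OF f] a n in auto)
  then show "val2_ge g e" unfolding g_def f_def by simp
  show "val2_eq g e" if "a = 0 \<or> (even a \<and> 2 \<le> a)"
    using val2_eq_mult[OF odd_poly_coeff_val(2)[OF n a(2) that] f] unfolding g_def f_def by simp
qed

lemma rising_poly_coeff_val_step:
  assumes n3: "3 \<le> n" and kN: "k \<le> 2 ^ n"
    and IH: "\<And>b. b \<le> 2 ^ (n - 1) \<Longrightarrow> val2_eq (coeff (rising_poly (n - 1)) b) (rising_val (n - 1) b)"
  shows "val2_eq (coeff (rising_poly n) k) (rising_val n k)"
proof -
  define M where "M = (2::nat) ^ (n - 1)"
  define g where "g a = coeff (odd_poly n) a * (2 ^ (M - (k - a)) * coeff (rising_poly (n - 1)) (k - a))" for a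
  define D where "D b = int n * int (k - b) + odd_poly_val n (k - b) - (kappa k - kappa b)" for b
  define a0 where "a0 = k - dominant_index n k"
  have n1: "1 \<le> n" "2 \<le> n" using n3 by auto
  have sm: "coeff (rising_poly n) k = (\<Sum>a\<le>k. g a)"
    unfolding rising_poly_split[OF n1(1)] coeff_mult even_poly_coeff g_def M_def by simp
  have summand: "val2_ge (g a) (rising_val n k + D (k - a))"
    "a = 0 \<or> (even a \<and> 2 \<le> a) \<Longrightarrow> val2_eq (g a) (rising_val n k + D (k - a))"
    if "a \<le> k" "a \<le> M" "k - a \<le> M" for a
    using rising_poly_summand_val[OF n1(2), of a k] IH that unfolding g_def D_def M_def by simp_all
  have dom: "val2_eq (g a0) (rising_val n k)"
    using summand(2)[of a0] dominant_index_bounds[OF n3 kN] kappa_diff_dominant[OF n3 kN]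
    unfolding a0_def D_def M_def by simp
  have rest: "val2_ge (g a) (rising_val n k + 1)" if "a \<le> k" "a \<noteq> a0" for a
  proof (cases "M < a \<or> M < k - a")
    case True
    then show ?thesis using coeff_odd_poly_top[of n a] coeff_rising_poly_top[of "n - 1" "k - a"]
      unfolding g_def M_def by auto
  next
    case False
    have "dominant_index n k \<noteq> k - a" using that dominant_index_bounds(1)[OF n3 kN] a0_def by auto
    then have "0 < D (k - a)" using kappa_diff_less[OF n3 kN, of "k - a"] False that M_def
      unfolding D_def by simp
    then show ?thesis using summand(1)[of a] False that val2_ge_mono by fastforce
  qed
  show ?thesis unfolding sm
    by (rule val2_eq_sum[where g = g]) (use dom rest a0_def in auto)
qed

lemma rising_poly_coeff_val_base:
  assumes "n = 1 \<or> n = 2" "k \<le> 2 ^ n"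
  shows "val2_eq (coeff (rising_poly n) k) (rising_val n k)"
proof -
  have "rising_poly 1 = [:2, 3, 1:]" "rising_poly 2 = [:24, 50, 35, 10, 1:]"
    unfolding rising_poly_def by (simp_all add: eval_nat_numeral lessThan_Suc)
  moreover have "k \<in> {0, 1, 2} \<or> (n = 2 \<and> k \<in> {3, 4})" using assms by auto
  ultimately show ?thesis using assms(1) kappa_small_values
      val2_eqI[of 2 1 1] val2_eqI[of 3 0 3] val2_eqI[of 1 0 1] val2_eqI[of 24 3 3]
      val2_eqI[of 50 1 25] val2_eqI[of 35 0 35] val2_eqI[of 10 1 5]
    by (auto simp: rising_val_def eval_nat_numeral)
qed

theorem rising_poly_coeff_val:
  "1 \<le> n \<Longrightarrow> k \<le> 2 ^ n \<Longrightarrow> val2_eq (coeff (rising_poly n) k) (rising_val n k)"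
proof (induction n arbitrary: k rule: nat_induct_at_least)
  case base
  then show ?case using rising_poly_coeff_val_base by simp
next
  case (Suc n)
  then show ?case using rising_poly_coeff_val_base[of "Suc n" k] rising_poly_coeff_val_step[of "Suc n" k]
    by (cases "n = 1") auto
qed


section \<open>Elementary symmetric functions of reciprocals\<close>

lemma coeff_linear_mult_left:
  "coeff ([:1, a:] * (p::'a::comm_ring_1 poly)) k = coeff p k + (if k = 0 then 0 else a * coeff p (k - 1))"
proof -
  have "[:1, a:] * p = p + pCons 0 (smult a p)" by (simp add: algebra_simps)
  then show ?thesis by (cases k) auto
qed

lemma subsets_card_0: "finite Y \<Longrightarrow> {S. S \<subseteq> Y \<and> card S = 0} = {{}}"
  using finite_subset by fastforce

lemma subsets_card_Suc_insert:
  assumes "x \<notin> Y" "finite Y"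
  shows "{S. S \<subseteq> insert x Y \<and> card S = Suc k} =
         {S. S \<subseteq> Y \<and> card S = Suc k} \<union> insert x ` {S. S \<subseteq> Y \<and> card S = k}"
proof (rule set_eqI, rule iffI)
  fix S assume "S \<in> {S. S \<subseteq> insert x Y \<and> card S = Suc k}"
  then have S: "S \<subseteq> insert x Y" "card S = Suc k" "finite S"
    using assms(2) finite_subset by auto
  show "S \<in> {S. S \<subseteq> Y \<and> card S = Suc k} \<union> insert x ` {S. S \<subseteq> Y \<and> card S = k}"
  proof (cases "x \<in> S")
    case True
    then have "S = insert x (S - {x})" "S - {x} \<subseteq> Y" "card (S - {x}) = k" using S by auto
    then show ?thesis by blast
  qed (use S in auto)
next
  fix S assume "S \<in> {S. S \<subseteq> Y \<and> card S = Suc k} \<union> insert x ` {S. S \<subseteq> Y \<and> card S = k}"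
  then show "S \<in> {S. S \<subseteq> insert x Y \<and> card S = Suc k}"
  proof
    assume "S \<in> insert x ` {S. S \<subseteq> Y \<and> card S = k}"
    then obtain T where T: "S = insert x T" "T \<subseteq> Y" "card T = k" by auto
    moreover have "finite T" "x \<notin> T" using T(2) assms finite_subset by auto
    ultimately show ?thesis by auto
  qed auto
qed

lemma sum_subsets_card_Suc_insert:
  fixes c :: "'b \<Rightarrow> 'a::comm_semiring_1"
  assumes x: "x \<notin> Y" and Y: "finite Y"
  shows "(\<Sum>S | S \<subseteq> insert x Y \<and> card S = Suc j. \<Prod>i\<in>S. c i)
         = (\<Sum>S | S \<subseteq> Y \<and> card S = Suc j. \<Prod>i\<in>S. c i) + c x * (\<Sum>S | S \<subseteq> Y \<and> card S = j. \<Prod>i\<in>S. c i)"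
proof -
  let ?S = "\<lambda>j. {S. S \<subseteq> Y \<and> card S = j}"
  have fin: "finite (?S j)" for j using Y by (simp add: finite_subset[of _ "Pow Y"])
  have disj: "?S (Suc j) \<inter> insert x ` ?S j = {}" using x by auto
  have inj: "inj_on (insert x) (?S j)"
  proof (rule inj_onI)
    fix S T assume "S \<in> ?S j" "T \<in> ?S j" "insert x S = insert x T"
    moreover have "x \<notin> S" "x \<notin> T" using calculation(1,2) x by auto
    ultimately show "S = T" using insert_ident by metis
  qed
  have "(\<Sum>S | S \<subseteq> insert x Y \<and> card S = Suc j. \<Prod>i\<in>S. c i)
        = (\<Sum>S\<in>?S (Suc j). \<Prod>i\<in>S. c i) + (\<Sum>S\<in>insert x ` ?S j. \<Prod>i\<in>S. c i)"
    unfolding subsets_card_Suc_insert[OF x Y] using fin disj by (intro sum.union_disjoint) auto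
  also have "(\<Sum>S\<in>insert x ` ?S j. \<Prod>i\<in>S. c i) = (\<Sum>S\<in>?S j. \<Prod>i\<in>insert x S. c i)"
    by (rule sum.reindex[OF inj, unfolded comp_def])
  also have "\<dots> = (\<Sum>S\<in>?S j. c x * (\<Prod>i\<in>S. c i))"
  proof (rule sum.cong)
    fix S assume "S \<in> ?S j"
    then have "finite S" "x \<notin> S" using x Y finite_subset by auto
    then show "(\<Prod>i\<in>insert x S. c i) = c x * (\<Prod>i\<in>S. c i)" by simp
  qed simp
  finally show ?thesis by (simp only: sum_distrib_left)
qed

lemma coeff_prod_linear_esym:
  fixes c :: "'b \<Rightarrow> 'a::comm_ring_1"
  assumes "finite Y"
  shows "coeff (\<Prod>i\<in>Y. [:1, c i:]) k = (\<Sum>S | S \<subseteq> Y \<and> card S = k. \<Prod>i\<in>S. c i)"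
  using assms
proof (induction Y arbitrary: k rule: finite_induct)
  case empty
  have e: "{S. S \<subseteq> {} \<and> card S = k} = (if k = 0 then {{}} else {})" by auto
  show ?case unfolding e by (simp add: coeff_1)
next
  case (insert x Y)
  show ?case
  proof (cases k)
    case 0
    have "coeff (\<Prod>i\<in>insert x Y. [:1, c i:]) 0 = 1"
      using insert by (simp add: coeff_linear_mult_left subsets_card_0)
    then show ?thesis unfolding 0 subsets_card_0[OF finite.insertI[OF insert(1)]] by simp
  next
    case (Suc j)
    have "coeff (\<Prod>i\<in>insert x Y. [:1, c i:]) (Suc j)
          = coeff (\<Prod>i\<in>Y. [:1, c i:]) (Suc j) + c x * coeff (\<Prod>i\<in>Y. [:1, c i:]) j"
      using insert(1,2) by (simp add: coeff_linear_mult_left)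
    then show ?thesis
      unfolding Suc insert.IH sum_subsets_card_Suc_insert[OF insert(2,1)] .
  qed
qed

lemma coeff_prod_linear_of_int:
  fixes c :: "nat \<Rightarrow> int"
  shows "coeff (\<Prod>i<m. [:of_int (c i) :: 'a::comm_ring_1, 1:]) k = of_int (coeff (\<Prod>i<m. [:c i, 1:]) k)"
proof (induction m arbitrary: k)
  case 0 then show ?case by (simp add: coeff_1)
next
  case (Suc m)
  show ?case by (simp only: prod.lessThan_Suc coeff_mult_monic_linear Suc) simp
qed

lemma H_eq_rising_poly_coeff_quotient:
  assumes "1 \<le> n"
  shows "H (2 ^ n) k = of_int (coeff (rising_poly n) k) / of_int (coeff (rising_poly n) 0)"
proof -
  define N where "N = (2::nat) ^ n"
  have S: "{1..N} = Suc ` {..<N}" by (simp add: image_Suc_lessThan)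
  have "H N k = coeff (\<Prod>i\<in>{1..N}. smult (1 / of_nat i) [:of_nat i, 1::rat:]) k"
    unfolding H_def coeff_prod_linear_esym[OF finite_atLeastAtMost, symmetric]
    by (intro arg_cong2[where f = coeff] prod.cong) auto
  also have "\<dots> = (\<Prod>i<N. 1 / of_nat (i + 1)) * coeff (\<Prod>i<N. [:of_int (int (i + 1)), 1::rat:]) k"
    unfolding prod_smult S by (simp add: prod.reindex)
  also have "\<dots> = of_int (coeff (rising_poly n) k) / of_int (coeff (rising_poly n) 0)"
    unfolding coeff_prod_linear_of_int rising_poly_def coeff_0_prod_monic_linear N_def
    by (simp add: prod_dividef)
  finally show ?thesis unfolding N_def .
qed

theorem corollary1p5:
  fixes n k :: nat
  assumes "0 < n" and "0 < k" and "k \<le> 2 ^ n"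
  shows "v2 (H (2 ^ n) k) \<le> - int n"
proof -
  have "val2_eq (coeff (rising_poly n) k) (rising_val n k)" "val2_eq (coeff (rising_poly n) 0) (rising_val n 0)"
    using rising_poly_coeff_val assms by auto
  then have "v2 (H (2 ^ n) k) = rising_val n k - rising_val n 0"
    using H_eq_rising_poly_coeff_quotient v2_of_int_quotient assms by simp
  then show ?thesis using rising_val_diff_le assms by simp
qed

end
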